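(* There exist 4-GDDs of types $39^8 120^1$, $39^8 123^1$, $39^8 126^1$, $39^8 129^1$ and $39^8 132^1$.
   Context: A 4-GDD of type $g_1^{u_1}\cdots g_r^{u_r}$ is a triple $(V,\mathcal G,\mathcal B)$ where $V$ is a set of $u_1g_1+\cdots+u_rg_r$ points, $\mathcal G$ is a partition of $V$ into $u_i$ groups of size $g_i$ for each $i$, and $\mathcal B$ is a non-empty collection of 4-element subsets (blocks) such that every pair of points from distinct groups lies in exactly one block and no pair from the same group lies in any block. *)

theory Defs
  imports Main "HOL-Library.Multiset"
begin

definition is_4GDD :: "'a set \<Rightarrow> 'a set set \<Rightarrow> 'a set set \<Rightarrow> bool" where
  "is_4GDD V G B \<longleftrightarrow>
     finite V \<and>
     (\<forall>X\<in>G. X \<noteq> {} \<and> X \<subseteq> V) \<and> \<Union>G = V \<and>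
     (\<forall>X\<in>G. \<forall>Y\<in>G. X \<noteq> Y \<longrightarrow> X \<inter> Y = {}) \<and>
     B \<noteq> {} \<and>
     (\<forall>b\<in>B. b \<subseteq> V \<and> card b = 4) \<and>
     (\<forall>X\<in>G. \<forall>Y\<in>G. \<forall>x\<in>X. \<forall>y\<in>Y. X \<noteq> Y \<longrightarrow> (\<exists>!b. b \<in> B \<and> x \<in> b \<and> y \<in> b)) \<and>
     (\<forall>X\<in>G. \<forall>x\<in>X. \<forall>y\<in>X. x \<noteq> y \<longrightarrow> \<not> (\<exists>b\<in>B. x \<in> b \<and> y \<in> b))"

text \<open>The type of a GDD: the multiset of its group sizes. Type g1^u1 ... gr^ur
corresponds to the multiset with u_i copies of g_i.\<close>

definition gdd_type :: "'a set set \<Rightarrow> nat multiset" where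
  "gdd_type G = image_mset card (mset_set G)"

definition has_4GDD_of_type :: "nat multiset \<Rightarrow> bool" where
  "has_4GDD_of_type T \<longleftrightarrow>
     (\<exists>(V :: nat set) G B. is_4GDD V G B \<and> gdd_type G = T)"

end

theory Submission
  imports Defs "HOL-Library.Countable"
begin

(* The designs are cyclic. The finite points are the pairs (g, z) in {0, ..., 7} \<times> Z_39, with
   groups given by g, and the group of size m = 3k consists of infinite points \<infinity>_(c, j) with
   c < k and j \<in> Z_3. A base block is a quadruple of finite points or a triple of finite points
   of some class c < k. Translation by t \<in> Z_39 adds t to the second coordinate of the finite
   points and completes the translate of a class-c triple by \<infinity>_(c, t mod 3), which is
   consistent because 3 divides 39. A finite point (g, z) and \<infinity>_(c, j) lie in the t-th translate
   of a triple containing (g, y) iff y + t = z and t = j mod 3. Hence the translates form a 4-GDD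
   as soon as
   (i) every pure difference, i.e. every pair of groups g < h together with a d \<in> Z_39, arises
       from exactly one base block, and
   (ii) for every c, the triples of class c meet every pair (group, residue mod 3) exactly once.
   Both conditions are checked by evaluation on explicit base blocks: k = 40, ..., 44 classes of
   eight triples and q = 22, 18, 14, 10, 6 quadruples, so that 24 k + 6 q = 1092 = 28 * 39 is
   exactly the number of pure differences. *)

section \<open>4-GDDs whose groups are the fibres of a map\<close>

definition fibres :: "('a \<Rightarrow> 'b) \<Rightarrow> 'a set \<Rightarrow> 'a set set" where
  "fibres f V = (\<lambda>k. {v \<in> V. f v = k}) ` f ` V"

lemma mem_fibres_eq:
  assumes "X \<in> fibres f V" "x \<in> X"
  shows "X = {v \<in> V. f v = f x}"
  using assms by (auto simp: fibres_def)

lemma is_4GDD_fibres: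
  assumes "finite V" "B \<noteq> {}"
    and blocks: "\<And>b. b \<in> B \<Longrightarrow> b \<subseteq> V \<and> card b = 4 \<and> inj_on f b"
    and pairs: "\<And>x y. x \<in> V \<Longrightarrow> y \<in> V \<Longrightarrow> f x \<noteq> f y \<Longrightarrow> \<exists>!b. b \<in> B \<and> x \<in> b \<and> y \<in> b"
  shows "is_4GDD V (fibres f V) B"
proof -
  have fibre_sub: "\<forall>X\<in>fibres f V. X \<noteq> {} \<and> X \<subseteq> V"
    by (auto simp: fibres_def)
  have union: "\<Union>(fibres f V) = V"
    by (auto simp: fibres_def)
  have disjoint: "\<forall>X\<in>fibres f V. \<forall>Y\<in>fibres f V. X \<noteq> Y \<longrightarrow> X \<inter> Y = {}"
  proof (intro ballI impI)
    fix X Y assume XY: "X \<in> fibres f V" "Y \<in> fibres f V" "X \<noteq> Y"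
    show "X \<inter> Y = {}"
    proof (rule ccontr)
      assume "X \<inter> Y \<noteq> {}"
      then obtain z where "z \<in> X" "z \<in> Y" by blast
      then show False
        using mem_fibres_eq[OF XY(1) \<open>z \<in> X\<close>] mem_fibres_eq[OF XY(2) \<open>z \<in> Y\<close>] XY(3) by simp
    qed
  qed
  have across: "\<forall>X\<in>fibres f V. \<forall>Y\<in>fibres f V. \<forall>x\<in>X. \<forall>y\<in>Y.
      X \<noteq> Y \<longrightarrow> (\<exists>!b. b \<in> B \<and> x \<in> b \<and> y \<in> b)"
  proof (intro ballI impI pairs)
    fix X Y x y assume XY: "X \<in> fibres f V" "Y \<in> fibres f V" "x \<in> X" "y \<in> Y" "X \<noteq> Y"
    then show "x \<in> V" "y \<in> V"
      using fibre_sub by auto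
    show "f x \<noteq> f y"
      using mem_fibres_eq[OF XY(1,3)] mem_fibres_eq[OF XY(2,4)] XY(5) by auto
  qed
  have within: "\<forall>X\<in>fibres f V. \<forall>x\<in>X. \<forall>y\<in>X. x \<noteq> y \<longrightarrow> \<not> (\<exists>b\<in>B. x \<in> b \<and> y \<in> b)"
    using blocks mem_fibres_eq by (fastforce dest: inj_onD)
  have "\<forall>b\<in>B. b \<subseteq> V \<and> card b = 4"
    using blocks by blast
  with assms(1,2) fibre_sub union disjoint across within show ?thesis
    unfolding is_4GDD_def by (intro conjI) assumption+
qed

lemma gdd_type_fibres:
  assumes "finite V"
  shows "gdd_type (fibres f V) = image_mset (\<lambda>k. card {v \<in> V. f v = k}) (mset_set (f ` V))"
proof -
  have "inj_on (\<lambda>k. {v \<in> V. f v = k}) (f ` V)"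
    by (rule inj_onI) blast
  then show ?thesis
    by (simp add: gdd_type_def fibres_def image_mset_mset_set[symmetric] multiset.map_comp comp_def)
qed

lemma ex1_image_iff:
  assumes "inj_on h A"
  shows "(\<exists>!b. b \<in> h ` A \<and> P b) \<longleftrightarrow> (\<exists>!a. a \<in> A \<and> P (h a))"
  using assms unfolding inj_on_def by blast

lemma is_4GDD_image_iff:
  assumes "inj h"
  shows "is_4GDD (h ` V) ((`) h ` G) ((`) h ` B) \<longleftrightarrow> is_4GDD V G B"
proof -
  have inj_img: "inj_on ((`) h) X" for X
    using assms by (simp add: inj_on_def inj_image_eq_iff)
  have Union_img: "\<Union>((`) h ` G) = h ` \<Union>G"
    by blast
  have card_img: "card (h ` b) = card b" for b
    using assms by (simp add: card_image inj_on_subset)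
  show ?thesis
    unfolding is_4GDD_def
    by (simp add: ex1_image_iff[OF inj_img] Union_img card_img finite_image_iff inj_on_subset[OF assms]
        inj_image_mem_iff[OF assms] inj_image_subset_iff[OF assms] inj_image_eq_iff[OF assms]
        image_Int[OF assms, symmetric] inj_eq[OF assms])
qed

lemma gdd_type_image:
  assumes "inj h"
  shows "gdd_type ((`) h ` G) = gdd_type G"
proof -
  have "inj_on ((`) h) G"
    using assms by (simp add: inj_on_def inj_image_eq_iff)
  then show ?thesis
    by (simp add: gdd_type_def image_mset_mset_set[symmetric] multiset.map_comp comp_def
        card_image inj_on_subset[OF assms])
qed

lemma has_4GDD_of_type_if_countable:
  fixes V :: "'a::countable set"
  assumes "is_4GDD V G B"
  shows "has_4GDD_of_type (gdd_type G)"
  unfolding has_4GDD_of_type_def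
  using assms is_4GDD_image_iff[OF inj_to_nat] gdd_type_image[OF inj_to_nat] by blast

section \<open>Cyclic development of base blocks\<close>

lemma add_mod_eq_iff:
  fixes n :: int
  assumes "0 \<le> t" "t < n" "0 \<le> z" "z < n"
  shows "(y + t) mod n = z \<longleftrightarrow> t = (z - y) mod n"
proof
  assume "(y + t) mod n = z"
  then have "(z - y) mod n = ((y + t) mod n - y) mod n"
    by simp
  also have "\<dots> = t"
    using assms(1,2) by (simp add: mod_diff_left_eq)
  finally show "t = (z - y) mod n" ..
next
  assume "t = (z - y) mod n"
  then have "(y + t) mod n = (y + (z - y)) mod n"
    by (simp add: mod_add_right_eq)
  then show "(y + t) mod n = z"
    using assms(3,4) by simp
qed

lemma diff_mod_eq_iff:
  fixes n :: int
  shows "(z1 - y1) mod n = (z2 - y2) mod n \<longleftrightarrow> (y2 - y1) mod n = (z2 - z1) mod n"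
  by (simp add: mod_eq_dvd_iff algebra_simps)

lemma diff_mod_mod_eq_iff:
  fixes n r :: int
  assumes "r dvd n" "0 \<le> j" "j < r"
  shows "(z - y) mod n mod r = j \<longleftrightarrow> y mod r = (z - j) mod r"
proof -
  have "(z - y) mod n mod r = j \<longleftrightarrow> (z - y) mod r = j mod r"
    using assms by (simp add: mod_mod_cancel)
  also have "\<dots> \<longleftrightarrow> y mod r = (z - j) mod r"
    by (simp add: mod_eq_dvd_iff algebra_simps dvd_diff_commute)
  finally show ?thesis .
qed

fun develop :: "nat \<Rightarrow> nat \<Rightarrow> int \<Rightarrow> nat option \<times> (nat \<times> int) set \<Rightarrow> ((nat \<times> int) + (nat \<times> int)) set" where
  "develop n r t (None, B) = Inl ` apsnd (\<lambda>z. (z + t) mod int n) ` B"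
| "develop n r t (Some c, B) = insert (Inr (c, t mod int r)) (Inl ` apsnd (\<lambda>z. (z + t) mod int n) ` B)"

lemma Inl_mem_develop:
  "Inl (g, z) \<in> develop n r t xB \<longleftrightarrow> (\<exists>y. (g, y) \<in> snd xB \<and> z = (y + t) mod int n)"
proof (cases xB)
  case (Pair x B)
  then show ?thesis by (cases x) force+
qed

lemma Inr_mem_develop:
  "Inr q \<in> develop n r t xB \<longleftrightarrow> (\<exists>c. fst xB = Some c \<and> q = (c, t mod int r))"
proof (cases xB)
  case (Pair x B)
  then show ?thesis by (cases x) auto
qed

lemma Inl_mem_develop_iff_translation:
  assumes "0 \<le> t" "t < int n" "0 \<le> z" "z < int n"
  shows "Inl (g, z) \<in> develop n r t xB \<longleftrightarrow> (\<exists>y. (g, y) \<in> snd xB \<and> t = (z - y) mod int n)"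
  unfolding Inl_mem_develop using add_mod_eq_iff[OF assms] by metis

definition pure_differences :: "nat \<Rightarrow> (nat \<times> int) set \<Rightarrow> ((nat \<times> nat) \<times> int) set" where
  "pure_differences n B = {((g, h), (z2 - z1) mod int n) | g z1 h z2. (g, z1) \<in> B \<and> (h, z2) \<in> B \<and> g < h}"

lemma pure_differencesI:
  "(g, z1) \<in> B \<Longrightarrow> (h, z2) \<in> B \<Longrightarrow> g < h \<Longrightarrow> ((g, h), (z2 - z1) mod int n) \<in> pure_differences n B"
  unfolding pure_differences_def by blast

definition pure_slots :: "nat \<Rightarrow> nat \<Rightarrow> ((nat \<times> nat) \<times> int) set" where
  "pure_slots u n = {(g, h). g < h \<and> h < u} \<times> {0..<int n}"

definition point_group :: "(nat \<times> int) + (nat \<times> int) \<Rightarrow> nat option" where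
  "point_group = case_sum (\<lambda>p. Some (fst p)) (\<lambda>_. None)"

locale cyclic_base_blocks =
  fixes u n r nb :: nat and I :: "(nat option \<times> (nat \<times> int) set) set"
  assumes n_pos: "0 < n" and r_dvd_n: "r dvd n" and u_pos: "0 < u" and nb_pos: "0 < nb"
    and base_in_range: "\<And>xB. xB \<in> I \<Longrightarrow> snd xB \<subseteq> {..<u} \<times> {0..<int n}"
    and base_transversal: "\<And>xB. xB \<in> I \<Longrightarrow> inj_on fst (snd xB)"
    and card_base_pure: "\<And>B. (None, B) \<in> I \<Longrightarrow> card B = 4"
    and card_base_mixed: "\<And>c B. (Some c, B) \<in> I \<Longrightarrow> card B = 3 \<and> c < nb"
    and mixed_cover: "\<And>c p. c < nb \<Longrightarrow> p \<in> {..<u} \<times> {0..<int r} \<Longrightarrow>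
      \<exists>!B. (Some c, B) \<in> I \<and> p \<in> apsnd (\<lambda>z. z mod int r) ` B"
    and pure_cover: "\<And>s. s \<in> pure_slots u n \<Longrightarrow> \<exists>!xB. xB \<in> I \<and> s \<in> pure_differences n (snd xB)"
begin

lemma r_pos: "0 < r"
  using r_dvd_n n_pos by (auto intro: Nat.gr0I)

definition points :: "((nat \<times> int) + (nat \<times> int)) set" where
  "points = Inl ` ({..<u} \<times> {0..<int n}) \<union> Inr ` ({..<nb} \<times> {0..<int r})"

definition blocks :: "((nat \<times> int) + (nat \<times> int)) set set" where
  "blocks = (\<lambda>(t, xB). develop n r t xB) ` ({0..<int n} \<times> I)"

lemma mem_blocks_iff:
  "b \<in> blocks \<longleftrightarrow> (\<exists>t xB. 0 \<le> t \<and> t < int n \<and> xB \<in> I \<and> b = develop n r t xB)"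
  by (force simp: blocks_def)

lemma base_point_unique: "xB \<in> I \<Longrightarrow> (g, y) \<in> snd xB \<Longrightarrow> (g, y') \<in> snd xB \<Longrightarrow> y = y'"
  using inj_onD[OF base_transversal, of xB "(g, y)" "(g, y')"] by auto

lemma finite_pair_mem_develop_iff:
  assumes t: "0 \<le> t" "t < int n" and z: "0 \<le> z1" "z1 < int n" "0 \<le> z2" "z2 < int n"
  shows "Inl (g, z1) \<in> develop n r t xB \<and> Inl (h, z2) \<in> develop n r t xB \<longleftrightarrow>
    (\<exists>y1 y2. (g, y1) \<in> snd xB \<and> (h, y2) \<in> snd xB \<and>
      (y2 - y1) mod int n = (z2 - z1) mod int n \<and> t = (z1 - y1) mod int n)"
  (is "?lhs \<longleftrightarrow> ?rhs")
proof
  assume ?lhs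
  then obtain y1 y2 where "(g, y1) \<in> snd xB" "(h, y2) \<in> snd xB"
      "t = (z1 - y1) mod int n" "t = (z2 - y2) mod int n"
    using Inl_mem_develop_iff_translation[OF t z(1,2)] Inl_mem_develop_iff_translation[OF t z(3,4)] by blast
  then show ?rhs
    using diff_mod_eq_iff[of z1 y1 "int n" z2 y2] by auto
next
  assume ?rhs
  then obtain y1 y2 where "(g, y1) \<in> snd xB" "(h, y2) \<in> snd xB"
      "t = (z1 - y1) mod int n" "t = (z2 - y2) mod int n"
    using diff_mod_eq_iff by metis
  then show ?lhs
    using Inl_mem_develop_iff_translation[OF t z(1,2)] Inl_mem_develop_iff_translation[OF t z(3,4)] by blast
qed

lemma finite_pair_cover:
  assumes gh: "g < h" "h < u" and z: "0 \<le> z1" "z1 < int n" "0 \<le> z2" "z2 < int n"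
  shows "\<exists>!b. b \<in> blocks \<and> Inl (g, z1) \<in> b \<and> Inl (h, z2) \<in> b"
proof -
  have "((g, h), (z2 - z1) mod int n) \<in> pure_slots u n"
    using gh n_pos by (simp add: pure_slots_def)
  from pure_cover[OF this] obtain xB where
    xB: "xB \<in> I" "((g, h), (z2 - z1) mod int n) \<in> pure_differences n (snd xB)" and
    unique: "\<And>xB'. xB' \<in> I \<and> ((g, h), (z2 - z1) mod int n) \<in> pure_differences n (snd xB') \<Longrightarrow> xB' = xB"
    by (rule ex1E) blast
  from xB(2) obtain y1 y2 where y: "(g, y1) \<in> snd xB" "(h, y2) \<in> snd xB"
      "(y2 - y1) mod int n = (z2 - z1) mod int n"
    by (auto simp: pure_differences_def)
  define t where "t = (z1 - y1) mod int n"
  have t: "0 \<le> t" "t < int n"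
    using n_pos by (simp_all add: t_def)
  show ?thesis
  proof (rule ex1I)
    show "develop n r t xB \<in> blocks \<and> Inl (g, z1) \<in> develop n r t xB \<and> Inl (h, z2) \<in> develop n r t xB"
      using xB(1) t y finite_pair_mem_develop_iff[OF t z, of g xB h] unfolding mem_blocks_iff t_def by blast
  next
    fix b assume b: "b \<in> blocks \<and> Inl (g, z1) \<in> b \<and> Inl (h, z2) \<in> b"
    then obtain t' xB' where b': "0 \<le> t'" "t' < int n" "xB' \<in> I" "b = develop n r t' xB'"
      by (auto simp: mem_blocks_iff)
    with b obtain y1' y2' where y': "(g, y1') \<in> snd xB'" "(h, y2') \<in> snd xB'"
        "(y2' - y1') mod int n = (z2 - z1) mod int n" "t' = (z1 - y1') mod int n"
      using finite_pair_mem_develop_iff[OF b'(1,2) z] by blast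
    then have "xB' = xB"
      using unique b'(3) pure_differencesI[OF y'(1,2) gh(1), of n] by simp
    then have "y1' = y1"
      using base_point_unique xB(1) y(1) y'(1) by blast
    then show "b = develop n r t xB"
      using b'(4) y'(4) \<open>xB' = xB\<close> by (simp add: t_def)
  qed
qed

lemma mixed_pair_mem_develop_iff:
  assumes t: "0 \<le> t" "t < int n" and j: "0 \<le> j" "j < int r" and z: "0 \<le> z" "z < int n"
  shows "Inr (c, j) \<in> develop n r t xB \<and> Inl (g, z) \<in> develop n r t xB \<longleftrightarrow>
    fst xB = Some c \<and> (\<exists>y. (g, y) \<in> snd xB \<and> y mod int r = (z - j) mod int r \<and> t = (z - y) mod int n)"
proof -
  have "int r dvd int n"
    using r_dvd_n by simp
  then have "t mod int r = j \<longleftrightarrow> y mod int r = (z - j) mod int r" if "t = (z - y) mod int n" for y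
    using diff_mod_mod_eq_iff[OF _ j, of "int n" z y] that by simp
  moreover have "Inr (c, j) \<in> develop n r t xB \<longleftrightarrow> fst xB = Some c \<and> t mod int r = j"
    by (auto simp: Inr_mem_develop)
  ultimately show ?thesis
    using Inl_mem_develop_iff_translation[OF t z, where g = g and xB = xB] by blast
qed

lemma mixed_pair_cover:
  assumes c: "c < nb" and j: "0 \<le> j" "j < int r" and g: "g < u" and z: "0 \<le> z" "z < int n"
  shows "\<exists>!b. b \<in> blocks \<and> Inr (c, j) \<in> b \<and> Inl (g, z) \<in> b"
proof -
  have "(g, (z - j) mod int r) \<in> {..<u} \<times> {0..<int r}"
    using g j by simp
  from mixed_cover[OF c this] obtain B where
    B: "(Some c, B) \<in> I" "(g, (z - j) mod int r) \<in> apsnd (\<lambda>z. z mod int r) ` B" and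
    unique: "\<And>B'. (Some c, B') \<in> I \<and> (g, (z - j) mod int r) \<in> apsnd (\<lambda>z. z mod int r) ` B' \<Longrightarrow> B' = B"
    by (rule ex1E) blast
  from B(2) obtain y where y: "(g, y) \<in> B" "y mod int r = (z - j) mod int r"
    by force
  define t where "t = (z - y) mod int n"
  have t: "0 \<le> t" "t < int n"
    using n_pos by (simp_all add: t_def)
  show ?thesis
  proof (rule ex1I)
    have "develop n r t (Some c, B) \<in> blocks"
      using B(1) t unfolding mem_blocks_iff by blast
    moreover have "fst (Some c, B) = Some c \<and>
        (\<exists>y'. (g, y') \<in> snd (Some c, B) \<and> y' mod int r = (z - j) mod int r \<and> t = (z - y') mod int n)"
      using y t_def by auto
    ultimately show "develop n r t (Some c, B) \<in> blocks \<and> Inr (c, j) \<in> develop n r t (Some c, B) \<and>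
        Inl (g, z) \<in> develop n r t (Some c, B)"
      using mixed_pair_mem_develop_iff[OF t j z] by blast
  next
    fix b assume b: "b \<in> blocks \<and> Inr (c, j) \<in> b \<and> Inl (g, z) \<in> b"
    then obtain t' xB' where b': "0 \<le> t'" "t' < int n" "xB' \<in> I" "b = develop n r t' xB'"
      by (auto simp: mem_blocks_iff)
    with b obtain y' where xB': "xB' = (Some c, snd xB')" and
      y': "(g, y') \<in> snd xB'" "y' mod int r = (z - j) mod int r" "t' = (z - y') mod int n"
      using mixed_pair_mem_develop_iff[OF b'(1,2) j z] by (metis prod.collapse)
    then have "snd xB' = B"
      using unique b'(3) by force
    moreover have "y' = y"
      using base_point_unique[OF B(1)] y(1) y'(1) \<open>snd xB' = B\<close> by auto
    ultimately show "b = develop n r t (Some c, B)"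
      using b'(4) xB' y'(3) by (simp add: t_def)
  qed
qed

lemma develop_subset_points:
  assumes "xB \<in> I" "0 \<le> t" "t < int n"
  shows "develop n r t xB \<subseteq> points"
proof -
  obtain x B where xB: "xB = (x, B)"
    by fastforce
  have "Inl ` apsnd (\<lambda>z. (z + t) mod int n) ` B \<subseteq> points"
    using base_in_range[OF assms(1)] n_pos by (auto simp: xB points_def)
  then show ?thesis
    using assms(1) card_base_mixed r_pos by (cases x) (auto simp: xB points_def)
qed

lemma inj_on_fst_apsnd_base: "xB \<in> I \<Longrightarrow> inj_on fst (apsnd f ` snd xB)"
  using base_transversal by (fastforce simp: inj_on_def)

lemma card_develop:
  assumes "xB \<in> I"
  shows "card (develop n r t xB) = 4"
proof -
  obtain x B where xB: "xB = (x, B)"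
    by fastforce
  have "card (Inl ` apsnd f ` B :: ((nat \<times> int) + (nat \<times> int)) set) = card B" for f
  proof -
    have "inj_on (apsnd f) B"
      using inj_on_imageI2[of fst "apsnd f" B] base_transversal[OF assms] by (simp add: xB comp_def)
    then show ?thesis
      by (simp add: card_image inj_on_image_iff)
  qed
  moreover have "finite B"
    using finite_subset[OF base_in_range[OF assms]] by (simp add: xB)
  ultimately show ?thesis
    using assms card_base_pure card_base_mixed by (cases x) (auto simp: xB card_insert_if)
qed

lemma inj_on_point_group_develop:
  assumes "xB \<in> I"
  shows "inj_on point_group (develop n r t xB)"
proof -
  obtain x B where xB: "xB = (x, B)"
    by fastforce
  have "inj_on point_group (Inl ` apsnd f ` B)" for f
    using inj_on_fst_apsnd_base[OF assms] by (auto simp: xB inj_on_def point_group_def)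
  then show ?thesis
    by (cases x) (auto simp: xB point_group_def)
qed

lemma blocks_nonempty: "blocks \<noteq> {}"
proof -
  obtain B where "(Some 0, B) \<in> I"
    using mixed_cover[OF nb_pos, of "(0, 0)"] u_pos r_pos by auto
  then have "develop n r 0 (Some 0, B) \<in> blocks"
    using n_pos unfolding mem_blocks_iff by (intro exI[of _ 0] exI[of _ "(Some 0, B)"]) simp
  then show ?thesis
    by blast
qed

lemma pair_cover:
  assumes "v \<in> points" "w \<in> points" "point_group v \<noteq> point_group w"
  shows "\<exists>!b. b \<in> blocks \<and> v \<in> b \<and> w \<in> b"
proof -
  have swap: "(\<exists>!b. b \<in> blocks \<and> w \<in> b \<and> v \<in> b) \<Longrightarrow> ?thesis"
    by (simp add: conj_commute conj_left_commute)
  consider (finite) g z1 h z2 where "v = Inl (g, z1)" "w = Inl (h, z2)" "g \<noteq> h" "g < u" "h < u"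
      "0 \<le> z1" "z1 < int n" "0 \<le> z2" "z2 < int n"
    | (mixed) g z c j where "v = Inl (g, z) \<and> w = Inr (c, j) \<or> v = Inr (c, j) \<and> w = Inl (g, z)"
      "g < u" "0 \<le> z" "z < int n" "c < nb" "0 \<le> j" "j < int r"
    using assms by (auto simp: points_def point_group_def)
  then show ?thesis
  proof cases
    case finite
    then consider "g < h" | "h < g"
      by linarith
    then show ?thesis
      using finite_pair_cover[of g h z1 z2] finite_pair_cover[of h g z2 z1] swap finite by cases auto
  next
    case mixed
    then show ?thesis
      using mixed_pair_cover[of c j g z] swap by auto
  qed
qed

theorem is_4GDD_points: "is_4GDD points (fibres point_group points) blocks"
proof (rule is_4GDD_fibres)
  show "finite points"
    by (simp add: points_def)
  show "blocks \<noteq> {}"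
    by (rule blocks_nonempty)
  show "b \<subseteq> points \<and> card b = 4 \<and> inj_on point_group b" if "b \<in> blocks" for b
    using that develop_subset_points card_develop inj_on_point_group_develop by (auto simp: mem_blocks_iff)
qed (rule pair_cover)

lemma gdd_type_points: "gdd_type (fibres point_group points) = add_mset (r * nb) (replicate_mset u n)"
proof -
  have groups: "point_group ` points = insert None (Some ` {..<u})"
    using n_pos nb_pos r_pos by (force simp: points_def point_group_def)
  have "{v \<in> points. point_group v = None} = Inr ` ({..<nb} \<times> {0..<int r})"
    by (auto simp: points_def point_group_def)
  then have card_None: "card {v \<in> points. point_group v = None} = r * nb"
    by (simp add: card_image card_cartesian_product)
  have "{v \<in> points. point_group v = Some g} = Inl ` ({g} \<times> {0..<int n})" if "g < u" for g
    using that by (auto simp: points_def point_group_def)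
  then have card_Some: "card {v \<in> points. point_group v = Some g} = n" if "g < u" for g
    using that by (simp add: card_image card_cartesian_product)
  have "finite points"
    by (simp add: points_def)
  then have "gdd_type (fibres point_group points) =
      image_mset (\<lambda>k. card {v \<in> points. point_group v = k}) (mset_set (insert None (Some ` {..<u})))"
    by (simp add: gdd_type_fibres groups)
  also have "mset_set (insert None (Some ` {..<u})) = add_mset None (image_mset Some (mset_set {..<u}))"
    by (simp add: mset_set.insert image_mset_mset_set)
  also have "image_mset (\<lambda>k. card {v \<in> points. point_group v = k}) \<dots> =
      add_mset (r * nb) (image_mset (\<lambda>g. card {v \<in> points. point_group v = Some g}) (mset_set {..<u}))"
    by (simp add: card_None multiset.map_comp comp_def)
  also have "image_mset (\<lambda>g. card {v \<in> points. point_group v = Some g}) (mset_set {..<u}) =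
      image_mset (\<lambda>_. n) (mset_set {..<u})"
    by (rule image_mset_cong) (simp add: card_Some)
  also have "\<dots> = replicate_mset u n"
    by (simp add: image_mset_const_eq)
  finally show ?thesis .
qed

theorem has_4GDD_of_type: "has_4GDD_of_type (add_mset (r * nb) (replicate_mset u n))"
  using has_4GDD_of_type_if_countable[OF is_4GDD_points] by (simp add: gdd_type_points)

end

section \<open>Checking base blocks by evaluation\<close>

lemma ex1_mem_concat_map:
  assumes "distinct (concat (map f xs))" "y \<in> set (concat (map f xs))"
  shows "\<exists>!x. x \<in> set xs \<and> y \<in> set (f x)"
  using assms by (induction xs) auto

lemma ex1_imageI:
  assumes "\<exists>!a. a \<in> A \<and> P (h a)"
  shows "\<exists>!b. b \<in> h ` A \<and> P b"
  using assms by blast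

lemma set_eq_if_distinct_length_card:
  assumes "distinct xs" "set xs \<subseteq> A" "finite A" "length xs = card A"
  shows "set xs = A"
  using assms by (simp add: card_subset_eq distinct_card)

lemma finite_less_pairs: "finite {(g, h). g < h \<and> h < (u::nat)}"
  by (rule finite_subset[of _ "{..<u} \<times> {..<u}"]) auto

lemma card_less_pairs: "card {(g, h). g < h \<and> h < (u::nat)} = u choose 2"
proof (induction u)
  case 0
  then show ?case by simp
next
  case (Suc u)
  have "{(g, h). g < h \<and> h < Suc u} = {(g, h). g < h \<and> h < u} \<union> (\<lambda>g. (g, u)) ` {..<u}"
    by auto
  moreover have "{(g, h). g < h \<and> h < u} \<inter> (\<lambda>g. (g, u)) ` {..<u} = {}"
    by auto
  ultimately have "card {(g, h). g < h \<and> h < Suc u} = (u choose 2) + u"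
    using Suc.IH finite_less_pairs by (simp add: card_Un_disjoint card_image inj_on_def)
  then show ?case
    by (simp add: numeral_2_eq_2)
qed

lemma card_pure_slots: "card (pure_slots u n) = (u choose 2) * n"
  by (simp add: pure_slots_def card_cartesian_product card_less_pairs)

(* Bottom-up merge sort: evaluated by code_simp, it checks distinctness of the lists of about
   a thousand integers below much faster than distinct or List.sort. *)

fun merge :: "'a::linorder list \<Rightarrow> 'a list \<Rightarrow> 'a list" where
  "merge [] ys = ys"
| "merge xs [] = xs"
| "merge (x # xs) (y # ys) = (if x \<le> y then x # merge xs (y # ys) else y # merge (x # xs) ys)"

fun merge_pairs :: "'a::linorder list list \<Rightarrow> 'a list list" where
  "merge_pairs (xs # ys # xss) = merge xs ys # merge_pairs xss"
| "merge_pairs xss = xss"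

lemma length_merge_pairs_le: "length (merge_pairs xss) \<le> length xss"
  by (induction xss rule: merge_pairs.induct) auto

function merge_all :: "'a::linorder list list \<Rightarrow> 'a list" where
  "merge_all [] = []"
| "merge_all [xs] = xs"
| "merge_all (xs # ys # xss) = merge_all (merge_pairs (xs # ys # xss))"
  by pat_completeness auto
termination
  by (relation "measure length") (auto simp: le_imp_less_Suc length_merge_pairs_le)

definition msort :: "'a::linorder list \<Rightarrow> 'a list" where
  "msort xs = merge_all (map (\<lambda>x. [x]) xs)"

lemma mset_merge: "mset (merge xs ys) = mset xs + mset ys"
  by (induction xs ys rule: merge.induct) auto

lemma mset_merge_pairs: "mset (concat (merge_pairs xss)) = mset (concat xss)"
  by (induction xss rule: merge_pairs.induct) (auto simp: mset_merge)

lemma mset_merge_all: "mset (merge_all xss) = mset (concat xss)"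
  by (induction xss rule: merge_all.induct) (auto simp: mset_merge mset_merge_pairs)

lemma mset_msort: "mset (msort xs) = mset xs"
  by (simp add: msort_def mset_merge_all)

lemma distinct_if_successively_less_msort:
  assumes "successively (<) (msort xs)"
  shows "distinct xs"
proof -
  have "sorted_wrt (<) (msort xs)"
    using assms by (simp add: successively_conv_sorted_wrt)
  then show ?thesis
    using mset_eq_imp_distinct_iff[OF mset_msort] strict_sorted_iff by blast
qed

definition base_ok :: "nat \<Rightarrow> nat \<Rightarrow> nat \<Rightarrow> (nat \<times> int) list \<Rightarrow> bool" where
  "base_ok u n k T \<longleftrightarrow> length T = k \<and> distinct (map fst T) \<and> (\<forall>(g, z) \<in> set T. g < u \<and> 0 \<le> z \<and> z < int n)"

lemma base_ok_set:
  "base_ok u n k T \<Longrightarrow> set T \<subseteq> {..<u} \<times> {0..<int n} \<and> inj_on fst (set T) \<and> card (set T) = k"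
  by (auto simp: base_ok_def distinct_map distinct_card)

definition pure_diffs :: "nat \<Rightarrow> (nat \<times> int) list \<Rightarrow> ((nat \<times> nat) \<times> int) list" where
  "pure_diffs n T = [((g, h), (z2 - z1) mod int n). (g, z1) \<leftarrow> T, (h, z2) \<leftarrow> T, g < h]"

lemma set_pure_diffs: "set (pure_diffs n T) = pure_differences n (set T)"
  by (force simp: pure_diffs_def pure_differences_def)

definition base_list :: "(nat \<times> int) list list list \<Rightarrow> (nat \<times> int) list list \<Rightarrow> (nat option \<times> (nat \<times> int) list) list" where
  "base_list F Q = [(Some c, T). (c, C) \<leftarrow> enumerate 0 F, T \<leftarrow> C] @ map (Pair None) Q"

lemma mem_base_list:
  "(x, T) \<in> set (base_list F Q) \<longleftrightarrow> (\<exists>c < length F. x = Some c \<and> T \<in> set (F ! c)) \<or> (x = None \<and> T \<in> set Q)"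
  by (auto simp: base_list_def in_set_enumerate_eq) (force simp: in_set_enumerate_eq)

definition all_pure_diffs :: "nat \<Rightarrow> (nat \<times> int) list list list \<Rightarrow> (nat \<times> int) list list \<Rightarrow> ((nat \<times> nat) \<times> int) list" where
  "all_pure_diffs n F Q = concat (map (\<lambda>xT. pure_diffs n (snd xT)) (base_list F Q))"

(* The integer encodings only feed the sorting: distinct encodings imply distinct entries, so
   soundness does not depend on their injectivity. *)

definition certificate :: "nat \<Rightarrow> nat \<Rightarrow> nat \<Rightarrow> (nat \<times> int) list list list \<Rightarrow> (nat \<times> int) list list \<Rightarrow> bool" where
  "certificate u n r F Q \<longleftrightarrow> F \<noteq> [] \<and>
     (\<forall>T \<in> set (concat F). base_ok u n 3 T) \<and> (\<forall>T \<in> set Q. base_ok u n 4 T) \<and>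
     (\<forall>C \<in> set F. length (concat C) = u * r \<and>
        successively (<) (msort (map (\<lambda>(g, i). int g * int r + i) (map (apsnd (\<lambda>z. z mod int r)) (concat C))))) \<and>
     length (all_pure_diffs n F Q) = (u choose 2) * n \<and>
     successively (<) (msort (map (\<lambda>((g, h), d). (int g * int u + int h) * int n + d) (all_pure_diffs n F Q)))"

definition base_blocks :: "(nat \<times> int) list list list \<Rightarrow> (nat \<times> int) list list \<Rightarrow> (nat option \<times> (nat \<times> int) set) set" where
  "base_blocks F Q = apsnd set ` set (base_list F Q)"

lemma mem_base_blocks: "(x, B) \<in> base_blocks F Q \<longleftrightarrow> (\<exists>T. (x, T) \<in> set (base_list F Q) \<and> B = set T)"
  by (force simp: base_blocks_def)

lemma Some_mem_base_blocks: "(Some c, B) \<in> base_blocks F Q \<longleftrightarrow> c < length F \<and> B \<in> set ` set (F ! c)"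
  by (auto simp: mem_base_blocks mem_base_list)

lemma cyclic_base_blocks_if_certificate:
  assumes cert: "certificate u n r F Q" and n: "0 < n" and r: "r dvd n" and u: "0 < u"
  shows "cyclic_base_blocks u n r (length F) (base_blocks F Q)"
proof -
  have r_pos: "0 < r"
    using r n by (auto intro: Nat.gr0I)
  have ok: "base_ok u n (case x of None \<Rightarrow> 4 | Some c \<Rightarrow> 3) T \<and> (\<forall>c. x = Some c \<longrightarrow> c < length F)"
    if "(x, T) \<in> set (base_list F Q)" for x T
    using that cert nth_mem by (fastforce simp: mem_base_list certificate_def)
  have ok_blocks: "snd xB \<subseteq> {..<u} \<times> {0..<int n} \<and> inj_on fst (snd xB) \<and>
      card (snd xB) = (case fst xB of None \<Rightarrow> 4 | Some c \<Rightarrow> 3) \<and> (\<forall>c. fst xB = Some c \<longrightarrow> c < length F)"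
    if "xB \<in> base_blocks F Q" for xB
    using that ok base_ok_set by (force simp: base_blocks_def)
  show ?thesis
  proof
    show "0 < n" "r dvd n" "0 < u" by fact+
    show "0 < length F"
      using cert by (simp add: certificate_def)
    show "snd xB \<subseteq> {..<u} \<times> {0..<int n}" "inj_on fst (snd xB)" if "xB \<in> base_blocks F Q" for xB
      using ok_blocks[OF that] by auto
    show "card B = 4" if "(None, B) \<in> base_blocks F Q" for B
      using ok_blocks[OF that] by simp
    show "card B = 3 \<and> c < length F" if "(Some c, B) \<in> base_blocks F Q" for c B
      using ok_blocks[OF that] by simp
  next
    fix c p assume c: "c < length F" and p: "p \<in> {..<u} \<times> {0..<int r}"
    define R where "R = map (apsnd (\<lambda>z. z mod int r)) (concat (F ! c))"
    have "successively (<) (msort (map (\<lambda>(g, i). int g * int r + i) R))" "length (concat (F ! c)) = u * r"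
      using cert nth_mem[OF c] unfolding certificate_def R_def by blast+
    then have "distinct R" "length R = u * r"
      using distinct_if_successively_less_msort distinct_map by (blast, simp add: R_def)
    moreover have "set R \<subseteq> {..<u} \<times> {0..<int r}"
      using cert c r_pos by (fastforce simp: certificate_def R_def base_ok_def)
    ultimately have "set R = {..<u} \<times> {0..<int r}"
      by (intro set_eq_if_distinct_length_card) (simp_all add: card_cartesian_product)
    then have "\<exists>!T. T \<in> set (F ! c) \<and> p \<in> set (map (apsnd (\<lambda>z. z mod int r)) T)"
      using p \<open>distinct R\<close> by (intro ex1_mem_concat_map) (auto simp: R_def map_concat)
    then have "\<exists>!B. B \<in> set ` set (F ! c) \<and> p \<in> apsnd (\<lambda>z. z mod int r) ` B"
      by (intro ex1_imageI) simp
    then show "\<exists>!B. (Some c, B) \<in> base_blocks F Q \<and> p \<in> apsnd (\<lambda>z. z mod int r) ` B"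
      using c by (simp add: Some_mem_base_blocks)
  next
    fix s assume s: "s \<in> pure_slots u n"
    let ?D = "all_pure_diffs n F Q"
    have "successively (<) (msort (map (\<lambda>((g, h), d). (int g * int u + int h) * int n + d) ?D))"
        "length ?D = (u choose 2) * n"
      using cert unfolding certificate_def by blast+
    then have "distinct ?D" "length ?D = card (pure_slots u n)"
      using distinct_if_successively_less_msort distinct_map by (blast, simp add: card_pure_slots)
    moreover have "set ?D \<subseteq> pure_slots u n"
      using ok n by (fastforce simp: all_pure_diffs_def pure_diffs_def pure_slots_def base_ok_def)
    ultimately have "set ?D = pure_slots u n"
      by (intro set_eq_if_distinct_length_card) (simp_all add: pure_slots_def finite_less_pairs)
    then have "\<exists>!xT. xT \<in> set (base_list F Q) \<and> s \<in> set (pure_diffs n (snd xT))"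
      using s \<open>distinct ?D\<close> by (intro ex1_mem_concat_map) (auto simp: all_pure_diffs_def)
    then show "\<exists>!xB. xB \<in> base_blocks F Q \<and> s \<in> pure_differences n (snd xB)"
      unfolding base_blocks_def by (intro ex1_imageI) (simp add: set_pure_diffs)
  qed
qed

lemma has_4GDD_of_type_if_certificate:
  assumes "certificate u n r F Q" "0 < n" "r dvd n" "0 < u"
  shows "has_4GDD_of_type (add_mset (r * length F) (replicate_mset u n))"
  using cyclic_base_blocks.has_4GDD_of_type[OF cyclic_base_blocks_if_certificate[OF assms]] .

definition classes_120 :: "(nat \<times> int) list list list" where
  "classes_120 = [[[(0,3), (3,18), (6,12)], [(0,16), (3,10), (6,17)], [(1,25), (2,12), (5,26)], [(1,24), (4,8), (7,36)], [(2,17), (3,17), (7,16)], [(4,3), (6,4), (7,38)], [(0,20), (2,22), (5,31)], [(1,2), (4,4), (5,9)]],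
    [[(0,19), (4,1), (6,15)], [(1,5), (2,2), (3,33)], [(2,13), (3,29), (5,0)], [(0,21), (4,8), (7,0)], [(1,12), (5,25), (7,32)], [(0,14), (1,37), (6,17)], [(3,1), (5,8), (7,22)], [(2,18), (4,12), (6,16)]],
    [[(1,36), (2,36), (5,20)], [(1,8), (2,19), (5,4)], [(0,24), (3,38), (4,7)], [(3,21), (5,24), (6,31)], [(4,3), (6,20), (7,16)], [(0,26), (1,22), (7,18)], [(0,13), (2,8), (3,4)], [(4,38), (6,24), (7,23)]],
    [[(1,31), (5,11), (6,1)], [(0,37), (6,6), (7,36)], [(0,33), (2,18), (4,34)], [(2,7), (3,27), (5,36)], [(1,0), (2,35), (7,14)], [(3,29), (4,29), (6,5)], [(0,17), (5,37), (7,4)], [(1,32), (3,28), (4,21)]],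
    [[(0,6), (1,17), (6,20)], [(0,11), (6,33), (7,20)], [(3,21), (4,37), (6,10)], [(2,2), (3,5), (4,20)], [(3,19), (4,3), (5,3)], [(1,15), (2,36), (7,36)], [(0,22), (1,10), (5,25)], [(2,37), (5,35), (7,1)]],
    [[(1,32), (2,10), (6,30)], [(1,15), (4,33), (7,6)], [(3,35), (4,26), (7,35)], [(0,31), (6,22), (7,4)], [(3,18), (5,31), (6,14)], [(0,29), (2,5), (5,36)], [(1,19), (2,0), (4,19)], [(0,30), (3,19), (5,17)]],
    [[(1,18), (2,24), (6,8)], [(1,7), (2,5), (5,27)], [(0,35), (6,33), (7,33)], [(0,24), (3,37), (4,31)], [(3,32), (6,1), (7,19)], [(1,23), (4,27), (5,22)], [(0,13), (2,19), (7,38)], [(3,12), (4,26), (5,23)]],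
    [[(1,8), (5,8), (7,6)], [(0,0), (4,25), (6,5)], [(1,31), (2,1), (3,29)], [(4,32), (6,4), (7,26)], [(1,30), (3,31), (5,7)], [(0,14), (2,8), (6,24)], [(0,28), (3,0), (4,3)], [(2,15), (5,12), (7,13)]],
    [[(3,37), (4,38), (5,23)], [(2,21), (6,20), (7,22)], [(0,19), (5,18), (7,14)], [(1,4), (4,33), (7,21)], [(2,8), (3,3), (4,31)], [(0,33), (1,8), (3,20)], [(0,17), (2,10), (6,37)], [(1,30), (5,28), (6,36)]],
    [[(1,18), (2,1), (3,3)], [(1,13), (4,19), (6,35)], [(2,9), (3,32), (5,28)], [(0,3), (3,37), (7,7)], [(0,13), (1,20), (6,36)], [(0,2), (5,23), (7,15)], [(4,3), (6,16), (7,32)], [(2,32), (4,38), (5,21)]],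
    [[(2,22), (6,29), (7,30)], [(2,15), (3,14), (6,19)], [(0,17), (4,8), (7,13)], [(0,0), (4,28), (5,18)], [(2,14), (4,9), (6,15)], [(0,37), (1,6), (3,3)], [(1,34), (3,1), (5,31)], [(1,14), (5,38), (7,14)]],
    [[(1,21), (5,29), (6,15)], [(0,17), (2,3), (4,1)], [(1,35), (2,4), (3,17)], [(0,25), (2,26), (5,27)], [(1,19), (4,35), (7,26)], [(0,3), (4,18), (5,37)], [(3,31), (6,32), (7,36)], [(3,9), (6,13), (7,25)]],
    [[(2,36), (4,4), (5,31)], [(3,4), (6,23), (7,38)], [(1,31), (4,23), (5,17)], [(0,18), (4,24), (7,19)], [(0,16), (1,5), (2,19)], [(1,33), (5,36), (6,12)], [(3,33), (6,25), (7,0)], [(0,38), (2,38), (3,17)]],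
    [[(2,35), (5,26), (7,19)], [(3,30), (5,7), (6,13)], [(2,21), (4,20), (7,23)], [(0,25), (1,27), (4,21)], [(2,25), (3,16), (4,28)], [(0,5), (1,8), (6,18)], [(0,15), (5,21), (6,14)], [(1,7), (3,2), (7,15)]],
    [[(2,23), (5,27), (7,12)], [(4,16), (5,34), (6,34)], [(1,12), (4,21), (5,29)], [(0,38), (2,19), (3,9)], [(0,31), (1,29), (3,28)], [(3,26), (6,21), (7,29)], [(0,0), (1,4), (7,7)], [(2,6), (4,2), (6,32)]],
    [[(1,11), (3,28), (7,21)], [(0,5), (2,17), (7,34)], [(2,21), (4,10), (6,33)], [(0,25), (1,1), (5,10)], [(3,32), (5,17), (6,20)], [(0,30), (3,33), (4,3)], [(4,8), (5,18), (6,34)], [(1,0), (2,1), (7,32)]],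
    [[(3,15), (5,35), (7,0)], [(3,35), (5,25), (6,20)], [(5,30), (6,21), (7,7)], [(0,6), (2,14), (4,11)], [(0,19), (1,0), (6,1)], [(0,35), (1,1), (4,9)], [(1,11), (2,15), (4,7)], [(2,31), (3,19), (7,17)]],
    [[(0,37), (2,29), (3,38)], [(1,14), (4,26), (7,3)], [(3,22), (4,4), (7,14)], [(0,30), (3,3), (5,34)], [(4,24), (5,8), (6,13)], [(1,16), (2,9), (6,33)], [(0,20), (2,16), (6,26)], [(1,36), (5,9), (7,28)]],
    [[(4,17), (5,9), (6,20)], [(0,29), (2,4), (3,11)], [(4,34), (5,8), (7,34)], [(2,9), (3,7), (6,24)], [(1,35), (2,14), (6,31)], [(0,37), (1,27), (3,15)], [(0,15), (1,10), (7,23)], [(4,12), (5,10), (7,18)]],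
    [[(1,2), (4,22), (6,4)], [(5,19), (6,20), (7,18)], [(0,6), (1,18), (3,8)], [(0,26), (3,6), (5,23)], [(2,6), (4,14), (6,24)], [(1,19), (3,10), (7,7)], [(2,5), (4,18), (7,20)], [(0,34), (2,25), (5,30)]],
    [[(2,8), (6,1), (7,34)], [(1,12), (4,3), (5,38)], [(0,3), (1,22), (3,26)], [(0,25), (6,27), (7,30)], [(4,32), (5,0), (6,20)], [(4,34), (5,1), (7,14)], [(1,11), (2,6), (3,3)], [(0,11), (2,34), (3,7)]],
    [[(1,20), (2,0), (4,5)], [(3,23), (5,22), (7,4)], [(3,34), (4,22), (6,27)], [(1,37), (3,30), (6,32)], [(2,10), (5,9), (7,6)], [(0,19), (2,38), (5,11)], [(0,33), (1,24), (4,12)], [(0,38), (6,10), (7,29)]],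
    [[(2,35), (3,28), (7,32)], [(0,13), (1,37), (7,13)], [(3,20), (4,30), (5,0)], [(0,21), (4,31), (7,24)], [(1,24), (3,0), (6,23)], [(0,2), (2,1), (6,6)], [(4,35), (5,16), (6,25)], [(1,2), (2,30), (5,23)]],
    [[(1,35), (3,7), (7,34)], [(2,35), (4,28), (7,12)], [(2,22), (6,12), (7,29)], [(0,25), (5,35), (6,22)], [(0,30), (2,27), (5,30)], [(1,10), (4,11), (5,4)], [(3,32), (4,6), (6,5)], [(0,14), (1,27), (3,6)]],
    [[(0,7), (2,14), (3,36)], [(2,13), (4,33), (5,20)], [(3,1), (6,7), (7,16)], [(0,17), (1,18), (4,17)], [(1,26), (3,20), (6,18)], [(1,31), (5,24), (6,20)], [(2,27), (4,13), (7,33)], [(0,9), (5,22), (7,11)]],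
    [[(1,14), (6,37), (7,11)], [(2,7), (3,11), (4,28)], [(4,24), (5,38), (6,20)], [(0,21), (3,21), (5,10)], [(1,34), (3,34), (4,2)], [(0,31), (1,9), (6,9)], [(2,9), (5,30), (7,0)], [(0,5), (2,26), (7,16)]],
    [[(4,17), (6,12), (7,4)], [(2,32), (5,34), (6,32)], [(1,24), (6,37), (7,26)], [(0,23), (5,17), (7,0)], [(2,15), (3,16), (4,15)], [(0,15), (1,14), (3,0)], [(1,25), (2,1), (5,36)], [(0,34), (3,11), (4,37)]],
    [[(0,15), (2,33), (7,8)], [(2,16), (3,30), (4,25)], [(1,7), (5,12), (6,31)], [(2,23), (4,38), (5,29)], [(0,32), (1,29), (7,16)], [(3,17), (4,21), (5,25)], [(3,4), (6,30), (7,18)], [(0,34), (1,27), (6,14)]],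
    [[(3,19), (4,30), (7,5)], [(0,34), (3,33), (7,1)], [(0,29), (2,1), (5,19)], [(1,17), (2,24), (7,18)], [(0,27), (2,32), (6,6)], [(1,30), (4,8), (5,36)], [(1,13), (5,17), (6,1)], [(3,14), (4,34), (6,17)]],
    [[(2,26), (3,31), (7,0)], [(0,21), (4,20), (5,22)], [(1,14), (2,0), (6,19)], [(0,1), (3,5), (7,28)], [(1,13), (3,27), (5,27)], [(1,15), (4,37), (6,35)], [(0,23), (6,12), (7,17)], [(2,13), (4,30), (5,29)]],
    [[(1,14), (2,26), (7,30)], [(3,17), (6,8), (7,19)], [(0,30), (5,8), (6,18)], [(1,31), (3,0), (4,2)], [(1,12), (4,25), (7,23)], [(2,27), (3,7), (5,13)], [(0,29), (2,19), (4,9)], [(0,25), (5,33), (6,37)]],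
    [[(0,14), (4,31), (7,38)], [(2,34), (6,16), (7,22)], [(0,7), (4,18), (6,38)], [(1,24), (5,3), (6,0)], [(3,19), (5,23), (7,9)], [(0,0), (1,25), (3,6)], [(1,32), (2,23), (4,8)], [(2,21), (3,32), (5,34)]],
    [[(0,29), (1,35), (5,6)], [(1,21), (6,3), (7,26)], [(3,22), (5,10), (7,1)], [(3,27), (4,17), (5,20)], [(2,27), (3,35), (6,35)], [(0,37), (2,7), (6,13)], [(1,13), (4,34), (7,3)], [(0,9), (2,35), (4,18)]],
    [[(0,7), (4,11), (5,26)], [(4,18), (5,19), (7,22)], [(2,12), (3,36), (6,26)], [(1,37), (2,14), (6,6)], [(0,32), (1,24), (7,3)], [(1,32), (3,16), (7,38)], [(3,11), (4,16), (6,25)], [(0,18), (2,31), (5,9)]],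
    [[(0,17), (2,0), (4,11)], [(3,30), (4,13), (7,31)], [(1,11), (3,14), (5,1)], [(0,16), (5,2), (6,1)], [(0,27), (1,4), (2,31)], [(5,9), (6,36), (7,29)], [(3,16), (4,12), (7,27)], [(1,24), (2,26), (6,17)]],
    [[(0,36), (5,20), (7,14)], [(1,3), (3,22), (4,14)], [(1,2), (3,18), (6,38)], [(0,11), (4,13), (6,6)], [(2,14), (3,8), (5,22)], [(0,19), (4,12), (5,24)], [(1,25), (2,24), (7,9)], [(2,28), (6,25), (7,10)]],
    [[(2,5), (4,19), (6,27)], [(0,6), (3,4), (6,13)], [(1,9), (3,14), (4,12)], [(5,28), (6,17), (7,7)], [(0,8), (1,8), (5,35)], [(0,28), (1,37), (4,23)], [(2,31), (3,18), (7,12)], [(2,3), (5,30), (7,14)]],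
    [[(3,33), (5,27), (7,29)], [(0,21), (2,9), (4,19)], [(0,22), (1,16), (4,3)], [(4,26), (5,8), (7,25)], [(2,37), (3,23), (6,0)], [(1,3), (5,37), (7,27)], [(0,17), (1,38), (6,10)], [(2,35), (3,13), (6,38)]],
    [[(0,23), (2,0), (3,6)], [(1,1), (3,14), (7,26)], [(0,15), (3,1), (5,13)], [(2,22), (4,10), (7,31)], [(4,15), (5,26), (6,0)], [(0,22), (4,38), (6,38)], [(1,38), (5,21), (6,13)], [(1,27), (2,11), (7,21)]],
    [[(1,0), (2,5), (6,30)], [(3,7), (5,8), (6,20)], [(3,26), (5,9), (7,36)], [(0,14), (2,31), (4,22)], [(1,32), (3,15), (4,12)], [(2,21), (4,8), (6,10)], [(0,24), (1,34), (7,4)], [(0,7), (5,19), (7,29)]]]"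

definition quadruples_120 :: "(nat \<times> int) list list" where
  "quadruples_120 = [[(0,33), (1,12), (2,4), (3,14)],
    [(0,15), (3,24), (4,3), (7,4)],
    [(0,9), (4,6), (6,3), (7,23)],
    [(0,0), (1,22), (3,32), (5,14)],
    [(1,6), (2,30), (4,3), (7,25)],
    [(3,4), (4,23), (5,1), (6,15)],
    [(1,38), (2,32), (3,8), (4,33)],
    [(0,9), (3,36), (5,2), (6,35)],
    [(1,17), (2,20), (4,22), (6,29)],
    [(1,22), (3,9), (4,15), (7,26)],
    [(0,15), (4,5), (5,30), (7,30)],
    [(2,6), (5,16), (6,1), (7,11)],
    [(2,3), (3,24), (5,3), (7,15)],
    [(1,27), (2,1), (5,16), (6,34)],
    [(0,31), (2,20), (5,14), (6,31)],
    [(1,0), (2,29), (6,25), (7,22)],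
    [(0,0), (3,8), (6,29), (7,36)],
    [(0,13), (1,0), (4,37), (7,34)],
    [(0,37), (2,35), (5,7), (7,18)],
    [(0,23), (3,30), (4,15), (6,9)],
    [(1,25), (3,32), (5,27), (6,29)],
    [(1,32), (2,3), (4,7), (5,23)]]"

definition classes_123 :: "(nat \<times> int) list list list" where
  "classes_123 = [[[(0,20), (3,0), (4,28)], [(0,31), (3,26), (5,0)], [(1,5), (6,19), (7,5)], [(1,25), (6,29), (7,31)], [(3,10), (4,9), (7,15)], [(2,8), (4,17), (6,33)], [(0,3), (2,16), (5,29)], [(1,9), (2,6), (5,1)]],
    [[(0,1), (4,12), (6,4)], [(1,36), (3,33), (5,24)], [(1,11), (2,7), (3,7)], [(0,23), (4,1), (6,30)], [(1,25), (2,8), (7,3)], [(2,9), (5,11), (7,31)], [(3,23), (6,23), (7,26)], [(0,27), (4,32), (5,22)]],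
    [[(2,24), (5,11), (6,27)], [(0,14), (1,10), (2,28)], [(3,20), (5,18), (7,21)], [(0,1), (4,28), (7,8)], [(3,36), (4,27), (6,11)], [(2,2), (6,37), (7,28)], [(0,33), (1,9), (3,37)], [(1,5), (4,14), (5,10)]],
    [[(1,29), (3,22), (7,18)], [(0,23), (2,12), (7,31)], [(0,27), (2,38), (4,37)], [(3,23), (5,32), (6,13)], [(1,34), (3,0), (7,26)], [(2,1), (4,24), (5,30)], [(0,37), (5,37), (6,24)], [(1,27), (4,26), (6,17)]],
    [[(1,29), (3,17), (7,28)], [(0,33), (1,16), (6,2)], [(3,19), (4,38), (6,16)], [(2,34), (4,3), (6,6)], [(2,26), (4,28), (5,8)], [(2,0), (5,33), (7,17)], [(0,5), (1,9), (7,18)], [(0,16), (3,27), (5,31)]],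
    [[(2,4), (5,2), (6,23)], [(1,1), (4,29), (7,5)], [(3,18), (4,12), (7,16)], [(0,9), (2,27), (6,22)], [(0,8), (3,16), (5,12)], [(0,19), (6,15), (7,36)], [(1,17), (2,2), (4,13)], [(1,24), (3,14), (5,31)]],
    [[(0,28), (1,18), (4,30)], [(3,8), (4,16), (5,30)], [(2,11), (5,26), (6,21)], [(0,17), (1,38), (6,26)], [(3,1), (4,8), (7,37)], [(1,31), (2,34), (7,5)], [(0,36), (2,24), (7,12)], [(3,27), (5,37), (6,4)]],
    [[(2,26), (5,37), (7,17)], [(4,37), (6,33), (7,0)], [(1,12), (3,32), (4,5)], [(0,27), (4,33), (7,19)], [(1,34), (2,3), (3,21)], [(0,4), (3,16), (6,38)], [(0,23), (2,10), (5,14)], [(1,5), (5,9), (6,28)]],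
    [[(2,36), (3,28), (4,12)], [(4,7), (5,37), (6,34)], [(2,38), (4,35), (7,10)], [(1,4), (5,29), (7,26)], [(0,12), (2,34), (3,6)], [(0,2), (1,29), (3,20)], [(0,31), (5,27), (6,36)], [(1,33), (6,38), (7,15)]],
    [[(2,27), (3,12), (6,20)], [(4,22), (6,21), (7,21)], [(1,21), (3,16), (5,0)], [(0,25), (3,17), (7,35)], [(0,33), (2,32), (5,35)], [(1,34), (5,37), (7,10)], [(0,17), (2,34), (4,29)], [(1,32), (4,15), (6,28)]],
    [[(2,2), (6,20), (7,25)], [(2,24), (3,29), (5,23)], [(0,24), (2,4), (5,10)], [(1,22), (6,0), (7,20)], [(0,2), (1,14), (4,11)], [(3,1), (4,36), (7,33)], [(0,22), (3,9), (6,19)], [(1,15), (4,31), (5,12)]],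
    [[(2,1), (5,1), (6,15)], [(0,11), (4,14), (7,35)], [(2,14), (3,2), (7,18)], [(2,0), (4,25), (7,16)], [(0,25), (1,34), (5,30)], [(0,24), (1,11), (4,21)], [(1,6), (3,27), (6,25)], [(3,25), (5,26), (6,11)]],
    [[(0,33), (3,22), (7,17)], [(3,6), (6,23), (7,19)], [(4,34), (5,38), (6,0)], [(1,3), (2,8), (4,32)], [(0,22), (1,29), (5,7)], [(0,20), (1,25), (2,36)], [(5,12), (6,4), (7,21)], [(2,37), (3,11), (4,15)]],
    [[(0,12), (1,25), (7,2)], [(1,32), (3,9), (6,1)], [(2,29), (4,29), (7,30)], [(0,13), (2,16), (4,12)], [(3,31), (5,30), (7,25)], [(0,38), (4,19), (6,0)], [(1,21), (2,21), (5,37)], [(3,32), (5,8), (6,2)]],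
    [[(2,8), (4,24), (7,29)], [(0,13), (3,6), (5,12)], [(1,5), (5,11), (7,1)], [(2,3), (4,29), (6,33)], [(0,32), (1,31), (6,10)], [(3,10), (4,7), (6,17)], [(0,18), (1,24), (7,15)], [(2,13), (3,20), (5,31)]],
    [[(0,2), (2,3), (3,24)], [(2,32), (3,29), (6,34)], [(0,16), (3,31), (7,14)], [(1,14), (4,14), (5,35)], [(1,4), (5,6), (6,2)], [(0,30), (4,15), (5,4)], [(4,16), (6,18), (7,1)], [(1,3), (2,1), (7,30)]],
    [[(0,8), (3,35), (6,2)], [(3,33), (5,19), (7,4)], [(1,37), (5,35), (6,1)], [(0,16), (1,8), (2,1)], [(0,15), (4,28), (7,35)], [(4,6), (5,9), (6,24)], [(1,36), (2,26), (4,38)], [(2,21), (3,37), (7,18)]],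
    [[(0,8), (5,37), (6,20)], [(1,16), (4,3), (6,37)], [(1,17), (4,22), (7,3)], [(0,1), (2,22), (6,3)], [(1,9), (3,21), (4,32)], [(2,32), (3,38), (7,7)], [(2,3), (3,4), (5,35)], [(0,3), (5,12), (7,5)]],
    [[(0,11), (1,8), (3,16)], [(2,19), (3,15), (7,32)], [(4,5), (5,15), (7,31)], [(0,0), (3,17), (7,6)], [(1,1), (2,2), (6,35)], [(0,1), (5,32), (6,22)], [(1,15), (2,36), (4,28)], [(4,24), (5,10), (6,21)]],
    [[(2,34), (3,27), (4,13)], [(0,29), (2,27), (6,19)], [(0,3), (3,2), (7,6)], [(0,16), (1,18), (3,25)], [(1,32), (5,26), (6,33)], [(1,19), (2,14), (5,6)], [(4,30), (6,38), (7,7)], [(4,23), (5,1), (7,2)]],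
    [[(0,15), (3,21), (6,25)], [(1,37), (2,0), (5,28)], [(0,25), (2,22), (4,16)], [(5,32), (6,18), (7,37)], [(2,14), (6,29), (7,23)], [(4,23), (5,6), (7,6)], [(0,29), (1,20), (3,26)], [(1,12), (3,13), (4,18)]],
    [[(1,38), (2,16), (4,29)], [(2,0), (3,23), (5,35)], [(1,31), (3,6), (7,33)], [(3,19), (4,4), (6,15)], [(0,36), (5,19), (7,29)], [(2,29), (5,9), (7,37)], [(0,31), (4,21), (6,35)], [(0,23), (1,0), (6,16)]],
    [[(3,21), (5,14), (7,6)], [(0,23), (5,24), (6,2)], [(4,7), (5,22), (7,20)], [(3,2), (4,17), (7,1)], [(0,31), (1,3), (2,31)], [(1,17), (2,30), (6,37)], [(2,29), (3,37), (4,18)], [(0,30), (1,31), (6,30)]],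
    [[(0,22), (4,26), (5,0)], [(1,8), (2,27), (7,34)], [(2,19), (6,7), (7,17)], [(3,20), (4,18), (5,17)], [(2,38), (3,21), (6,3)], [(0,21), (1,15), (5,10)], [(0,26), (3,16), (4,19)], [(1,4), (6,14), (7,9)]],
    [[(1,22), (3,32), (5,32)], [(1,32), (2,8), (4,14)], [(0,15), (3,18), (6,13)], [(2,37), (4,27), (5,15)], [(0,17), (6,5), (7,18)], [(1,9), (3,34), (6,15)], [(2,12), (4,16), (7,4)], [(0,37), (5,4), (7,17)]],
    [[(3,20), (6,22), (7,34)], [(1,10), (2,19), (6,17)], [(1,6), (4,10), (5,21)], [(2,23), (5,35), (7,2)], [(1,2), (3,25), (4,35)], [(0,20), (4,21), (6,6)], [(0,33), (3,24), (5,13)], [(0,16), (2,12), (7,15)]],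
    [[(4,13), (6,14), (7,7)], [(2,24), (3,15), (6,30)], [(0,34), (1,13), (4,21)], [(1,12), (5,11), (7,2)], [(0,5), (1,29), (5,19)], [(3,8), (4,26), (7,15)], [(2,35), (3,22), (5,36)], [(0,30), (2,1), (6,13)]],
    [[(0,3), (1,28), (7,12)], [(2,25), (3,23), (4,16)], [(1,20), (5,28), (6,7)], [(2,29), (4,30), (5,14)], [(0,38), (2,6), (7,11)], [(3,34), (4,17), (5,15)], [(3,6), (6,33), (7,37)], [(0,34), (1,18), (6,11)]],
    [[(0,34), (3,15), (6,33)], [(3,29), (4,3), (7,11)], [(0,2), (2,25), (5,0)], [(1,1), (2,15), (4,20)], [(5,37), (6,26), (7,33)], [(0,36), (2,29), (7,31)], [(1,5), (5,14), (6,7)], [(1,33), (3,16), (4,25)]],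
    [[(0,30), (3,15), (7,30)], [(0,26), (4,12), (6,10)], [(2,21), (3,16), (6,3)], [(2,34), (3,23), (7,7)], [(1,38), (4,14), (5,22)], [(1,19), (4,22), (5,38)], [(0,13), (1,27), (7,38)], [(2,26), (5,33), (6,35)]],
    [[(1,18), (5,11), (7,28)], [(4,17), (6,32), (7,29)], [(1,1), (3,16), (5,21)], [(2,3), (3,5), (4,6)], [(0,27), (4,22), (7,15)], [(0,14), (2,19), (3,0)], [(1,35), (5,10), (6,9)], [(0,28), (2,20), (6,4)]],
    [[(3,4), (4,6), (5,11)], [(3,26), (4,13), (6,0)], [(0,28), (6,13), (7,0)], [(0,38), (4,38), (6,5)], [(1,37), (2,29), (5,10)], [(0,9), (5,6), (7,13)], [(1,32), (2,19), (3,36)], [(1,9), (2,3), (7,23)]],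
    [[(1,33), (6,3), (7,12)], [(0,13), (3,34), (5,24)], [(0,12), (4,34), (6,4)], [(0,26), (2,2), (5,10)], [(2,21), (3,11), (4,3)], [(1,38), (2,22), (6,11)], [(1,10), (4,17), (7,34)], [(3,24), (5,11), (7,26)]],
    [[(0,30), (4,12), (5,24)], [(3,15), (6,6), (7,24)], [(4,11), (5,20), (7,14)], [(0,14), (1,9), (4,10)], [(0,37), (1,37), (7,31)], [(1,23), (2,29), (3,2)], [(2,10), (5,7), (6,11)], [(2,30), (3,10), (6,13)]],
    [[(0,37), (2,6), (4,26)], [(3,19), (4,7), (7,38)], [(5,34), (6,7), (7,6)], [(5,14), (6,24), (7,16)], [(0,24), (2,14), (6,38)], [(1,29), (3,3), (5,30)], [(1,10), (3,29), (4,24)], [(0,14), (1,24), (2,34)]],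
    [[(0,12), (6,1), (7,30)], [(1,22), (3,14), (4,20)], [(1,15), (3,13), (6,6)], [(0,4), (4,19), (5,16)], [(2,7), (3,6), (5,30)], [(0,11), (5,38), (7,25)], [(2,2), (4,24), (7,35)], [(1,8), (2,24), (6,32)]],
    [[(4,30), (5,15), (6,23)], [(3,30), (5,32), (7,20)], [(2,27), (3,31), (6,4)], [(2,19), (6,24), (7,12)], [(0,7), (1,0), (3,17)], [(0,36), (1,16), (4,4)], [(1,5), (4,23), (5,16)], [(0,26), (2,32), (7,31)]],
    [[(1,8), (2,15), (7,15)], [(1,9), (2,34), (6,24)], [(1,37), (3,31), (6,20)], [(4,5), (5,6), (7,14)], [(0,13), (2,38), (3,9)], [(4,1), (5,34), (6,22)], [(0,8), (4,0), (7,34)], [(0,30), (3,32), (5,11)]],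
    [[(0,18), (2,13), (3,16)], [(1,31), (5,31), (6,31)], [(0,8), (2,12), (3,21)], [(1,15), (2,14), (7,10)], [(4,24), (5,11), (6,24)], [(4,17), (5,9), (7,27)], [(4,25), (6,8), (7,23)], [(0,34), (1,32), (3,2)]],
    [[(2,1), (4,38), (6,27)], [(0,2), (3,25), (5,5)], [(0,25), (2,27), (5,18)], [(1,22), (6,11), (7,25)], [(1,30), (3,32), (7,38)], [(2,29), (4,9), (6,28)], [(0,0), (1,20), (7,21)], [(3,36), (4,13), (5,31)]],
    [[(0,8), (5,18), (7,4)], [(2,38), (4,9), (5,4)], [(1,34), (2,7), (5,17)], [(1,9), (3,9), (6,3)], [(3,29), (4,19), (6,13)], [(0,22), (4,38), (7,38)], [(1,20), (2,24), (7,0)], [(0,15), (3,16), (6,35)]]]"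

definition quadruples_123 :: "(nat \<times> int) list list" where
  "quadruples_123 = [[(1,24), (2,15), (3,9), (7,21)],
    [(2,35), (3,11), (4,28), (6,35)],
    [(1,17), (3,20), (4,34), (5,2)],
    [(1,2), (2,29), (5,15), (7,14)],
    [(2,7), (3,32), (6,4), (7,32)],
    [(2,5), (3,19), (5,27), (6,18)],
    [(0,29), (1,37), (4,23), (6,9)],
    [(0,36), (1,14), (3,13), (4,34)],
    [(0,5), (1,33), (2,14), (4,28)],
    [(1,28), (4,13), (6,25), (7,9)],
    [(0,0), (2,12), (4,19), (5,21)],
    [(0,26), (2,20), (6,37), (7,9)],
    [(3,32), (5,35), (6,33), (7,18)],
    [(0,36), (5,4), (6,27), (7,25)],
    [(0,37), (2,28), (4,16), (5,16)],
    [(0,19), (1,22), (3,33), (4,33)],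
    [(0,12), (3,12), (5,28), (7,3)],
    [(1,2), (5,30), (6,33), (7,34)]]"

definition classes_126 :: "(nat \<times> int) list list list" where
  "classes_126 = [[[(0,28), (3,35), (6,25)], [(0,12), (2,14), (5,4)], [(1,14), (4,20), (6,36)], [(1,7), (4,7), (7,23)], [(2,6), (3,30), (7,30)], [(4,27), (6,20), (7,13)], [(0,11), (3,37), (5,27)], [(1,12), (2,25), (5,26)]],
    [[(0,24), (1,7), (6,17)], [(1,11), (3,25), (7,3)], [(2,35), (4,1), (7,19)], [(0,26), (2,13), (6,9)], [(1,9), (2,21), (7,26)], [(3,6), (4,36), (5,16)], [(4,32), (5,18), (6,13)], [(0,34), (3,29), (5,38)]],
    [[(1,20), (2,7), (6,8)], [(0,29), (1,18), (3,17)], [(0,10), (2,27), (5,38)], [(3,22), (4,21), (6,4)], [(4,32), (5,9), (7,24)], [(1,1), (2,2), (5,7)], [(0,24), (3,30), (7,1)], [(4,37), (6,24), (7,11)]],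
    [[(1,24), (5,34), (7,6)], [(0,8), (2,30), (7,29)], [(0,4), (1,17), (6,22)], [(3,23), (5,21), (6,32)], [(1,22), (3,13), (7,7)], [(2,32), (3,0), (4,5)], [(0,3), (4,3), (5,20)], [(2,28), (4,13), (6,30)]],
    [[(3,11), (6,8), (7,3)], [(0,24), (1,18), (5,30)], [(4,20), (5,23), (6,24)], [(2,8), (3,25), (4,9)], [(3,21), (4,19), (6,31)], [(2,7), (5,37), (7,26)], [(0,20), (1,38), (7,4)], [(0,37), (1,34), (2,9)]],
    [[(0,9), (2,32), (6,24)], [(1,2), (4,15), (7,3)], [(3,17), (4,13), (7,25)], [(2,0), (4,8), (5,21)], [(0,29), (3,19), (5,8)], [(0,31), (3,6), (7,5)], [(1,10), (2,4), (6,23)], [(1,21), (5,22), (6,37)]],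
    [[(1,13), (3,6), (4,24)], [(0,11), (2,21), (5,38)], [(0,15), (2,8), (6,29)], [(1,8), (6,16), (7,19)], [(2,13), (3,7), (7,2)], [(0,22), (4,8), (7,27)], [(1,24), (5,9), (6,33)], [(3,5), (4,19), (5,31)]],
    [[(2,26), (5,21), (7,0)], [(0,22), (2,12), (4,32)], [(1,31), (3,23), (5,22)], [(3,0), (6,38), (7,29)], [(1,9), (2,1), (3,16)], [(0,0), (4,27), (6,9)], [(0,38), (4,34), (6,25)], [(1,26), (5,5), (7,28)]],
    [[(2,13), (4,2), (7,35)], [(0,33), (1,0), (6,38)], [(2,9), (4,4), (7,15)], [(1,17), (4,27), (5,25)], [(0,22), (2,26), (5,5)], [(0,5), (1,28), (3,2)], [(3,28), (5,21), (6,21)], [(3,15), (6,10), (7,4)]],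
    [[(3,3), (4,22), (5,21)], [(2,25), (4,35), (6,31)], [(1,19), (2,2), (3,13)], [(1,0), (3,17), (7,32)], [(0,31), (5,32), (7,12)], [(0,3), (2,30), (5,1)], [(0,2), (6,35), (7,19)], [(1,38), (4,27), (6,27)]],
    [[(2,26), (6,3), (7,13)], [(2,36), (3,20), (5,0)], [(0,32), (6,13), (7,3)], [(1,11), (2,34), (5,10)], [(1,19), (4,14), (7,29)], [(0,3), (3,12), (4,24)], [(0,1), (1,33), (3,16)], [(4,16), (5,23), (6,26)]],
    [[(1,32), (5,36), (6,35)], [(0,38), (4,18), (7,23)], [(2,38), (3,7), (5,13)], [(0,24), (3,3), (7,15)], [(1,16), (4,13), (7,4)], [(0,28), (2,27), (4,17)], [(3,17), (5,11), (6,28)], [(1,6), (2,22), (6,30)]],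
    [[(0,14), (5,13), (7,12)], [(1,13), (3,9), (6,3)], [(2,35), (4,33), (5,2)], [(1,29), (4,11), (6,22)], [(4,34), (5,0), (7,32)], [(0,3), (1,18), (2,27)], [(3,7), (6,35), (7,10)], [(0,31), (2,34), (3,29)]],
    [[(1,19), (2,27), (7,22)], [(0,19), (1,17), (4,34)], [(2,7), (6,0), (7,18)], [(2,35), (3,32), (4,17)], [(0,33), (3,15), (4,3)], [(0,17), (5,38), (6,17)], [(1,12), (5,12), (6,10)], [(3,22), (5,19), (7,20)]],
    [[(1,23), (2,25), (7,6)], [(5,21), (6,18), (7,7)], [(1,34), (4,33), (5,20)], [(2,12), (4,26), (6,11)], [(0,36), (5,4), (7,26)], [(0,5), (3,15), (6,28)], [(0,4), (1,3), (3,4)], [(2,38), (3,17), (4,34)]],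
    [[(1,2), (3,11), (5,25)], [(0,18), (3,31), (7,27)], [(4,24), (6,3), (7,38)], [(2,25), (5,24), (6,20)], [(1,12), (5,32), (6,13)], [(0,13), (2,27), (4,5)], [(0,26), (3,6), (4,1)], [(1,28), (2,8), (7,22)]],
    [[(2,5), (3,31), (5,7)], [(3,9), (5,36), (7,30)], [(1,32), (5,14), (6,7)], [(0,21), (1,16), (4,19)], [(4,27), (6,17), (7,14)], [(0,17), (2,9), (6,21)], [(1,27), (2,34), (4,17)], [(0,13), (3,38), (7,13)]],
    [[(0,17), (2,29), (3,22)], [(1,35), (4,5), (7,25)], [(4,3), (5,14), (6,2)], [(0,0), (5,3), (6,16)], [(1,12), (3,9), (4,19)], [(2,16), (3,29), (7,6)], [(0,28), (2,36), (6,24)], [(1,28), (5,37), (7,14)]],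
    [[(3,6), (5,27), (7,25)], [(2,5), (3,4), (7,8)], [(4,11), (5,11), (7,21)], [(0,18), (1,14), (3,29)], [(1,19), (2,1), (6,38)], [(0,26), (2,15), (6,24)], [(0,16), (1,24), (4,9)], [(4,31), (5,7), (6,19)]],
    [[(3,6), (4,32), (6,12)], [(1,32), (2,10), (6,10)], [(0,29), (4,30), (5,26)], [(0,3), (3,25), (7,22)], [(1,24), (6,8), (7,24)], [(1,4), (2,33), (5,33)], [(0,4), (3,8), (5,13)], [(2,26), (4,13), (7,20)]],
    [[(3,16), (4,5), (6,14)], [(0,10), (1,27), (5,25)], [(0,20), (2,14), (3,23)], [(2,22), (6,36), (7,18)], [(5,29), (6,19), (7,17)], [(2,30), (4,18), (5,15)], [(1,8), (3,33), (7,7)], [(0,24), (1,16), (4,7)]],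
    [[(1,14), (2,9), (4,22)], [(0,38), (5,11), (7,11)], [(1,27), (3,15), (6,3)], [(3,13), (4,21), (6,16)], [(0,6), (3,14), (5,30)], [(2,14), (5,1), (7,7)], [(0,1), (1,13), (2,10)], [(4,23), (6,20), (7,12)]],
    [[(2,16), (3,4), (4,19)], [(0,7), (5,7), (6,14)], [(3,8), (4,12), (7,34)], [(2,15), (5,11), (7,15)], [(0,23), (1,9), (2,29)], [(1,38), (3,15), (6,33)], [(4,38), (5,30), (7,8)], [(0,24), (1,34), (6,34)]],
    [[(0,30), (4,2), (7,26)], [(1,28), (2,34), (5,20)], [(2,0), (6,25), (7,27)], [(0,35), (5,19), (6,23)], [(2,8), (3,11), (5,24)], [(0,34), (1,21), (4,1)], [(3,28), (4,21), (6,15)], [(1,26), (3,24), (7,10)]],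
    [[(0,3), (1,4), (3,38)], [(1,27), (2,23), (4,20)], [(3,25), (4,6), (5,8)], [(1,26), (2,37), (4,7)], [(0,8), (6,19), (7,0)], [(3,0), (5,31), (6,0)], [(2,30), (6,20), (7,28)], [(0,25), (5,12), (7,32)]],
    [[(1,9), (6,0), (7,13)], [(2,37), (3,18), (6,22)], [(1,2), (4,35), (5,28)], [(2,15), (3,17), (5,8)], [(1,19), (3,22), (7,6)], [(0,18), (4,21), (5,12)], [(0,26), (4,7), (6,38)], [(0,1), (2,8), (7,5)]],
    [[(0,32), (4,10), (7,7)], [(1,0), (3,6), (6,18)], [(0,18), (1,38), (6,35)], [(0,34), (3,25), (5,20)], [(2,2), (5,22), (7,18)], [(3,5), (4,21), (7,23)], [(1,25), (2,10), (5,18)], [(2,36), (4,35), (6,10)]],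
    [[(0,27), (1,38), (7,14)], [(2,36), (3,18), (4,15)], [(0,20), (1,25), (6,12)], [(3,14), (4,4), (5,22)], [(0,37), (2,17), (7,34)], [(2,31), (3,4), (4,11)], [(5,9), (6,11), (7,33)], [(1,9), (5,14), (6,1)]],
    [[(0,35), (3,8), (4,9)], [(3,36), (6,2), (7,2)], [(0,30), (1,30), (2,16)], [(2,35), (4,11), (5,32)], [(1,13), (5,16), (6,25)], [(0,10), (2,6), (7,37)], [(5,36), (6,18), (7,6)], [(1,8), (3,28), (4,34)]],
    [[(2,20), (3,36), (7,27)], [(0,22), (4,12), (6,17)], [(2,30), (3,1), (5,4)], [(0,30), (3,14), (7,2)], [(0,26), (1,30), (6,12)], [(1,23), (4,37), (5,18)], [(1,7), (4,29), (7,19)], [(2,25), (5,5), (6,19)]],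
    [[(1,13), (2,18), (7,20)], [(4,14), (6,22), (7,7)], [(0,3), (2,1), (6,6)], [(2,35), (3,31), (4,3)], [(1,27), (4,25), (7,33)], [(0,16), (3,5), (5,6)], [(1,11), (3,15), (5,26)], [(0,29), (5,1), (6,11)]],
    [[(4,35), (5,0), (7,13)], [(3,10), (6,27), (7,3)], [(0,6), (4,0), (6,25)], [(0,17), (1,2), (6,8)], [(2,22), (3,26), (5,11)], [(1,25), (5,13), (7,20)], [(1,36), (2,12), (4,28)], [(0,25), (2,2), (3,27)]],
    [[(1,31), (3,11), (4,32)], [(3,1), (6,25), (7,3)], [(0,23), (4,28), (5,3)], [(0,4), (2,25), (4,27)], [(1,38), (2,26), (3,27)], [(2,9), (5,7), (6,26)], [(0,21), (1,30), (7,10)], [(5,38), (6,24), (7,35)]],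
    [[(0,2), (4,1), (5,34)], [(4,3), (5,30), (7,38)], [(3,30), (6,10), (7,15)], [(0,36), (1,11), (4,38)], [(0,34), (1,16), (7,13)], [(1,27), (2,20), (3,11)], [(2,7), (5,11), (6,17)], [(2,21), (3,4), (6,24)]],
    [[(0,38), (4,6), (7,5)], [(2,22), (3,20), (4,14)], [(5,29), (6,18), (7,19)], [(5,3), (6,8), (7,15)], [(0,33), (1,10), (2,9)], [(1,11), (3,16), (5,28)], [(1,21), (3,3), (4,25)], [(0,13), (2,8), (6,19)]],
    [[(0,24), (6,37), (7,17)], [(1,37), (3,0), (5,20)], [(2,19), (3,38), (6,0)], [(0,31), (4,28), (7,34)], [(1,0), (3,10), (6,2)], [(0,23), (4,35), (5,25)], [(1,5), (2,9), (7,18)], [(2,32), (4,18), (5,24)]],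
    [[(1,30), (4,9), (6,24)], [(0,6), (3,26), (5,26)], [(2,6), (3,12), (6,34)], [(2,32), (6,11), (7,23)], [(0,22), (1,2), (5,13)], [(0,20), (4,38), (7,3)], [(1,34), (3,7), (4,7)], [(2,25), (5,9), (7,1)]],
    [[(3,5), (5,30), (7,12)], [(1,16), (2,19), (6,23)], [(0,27), (1,17), (6,28)], [(4,33), (5,4), (7,34)], [(0,2), (2,20), (3,34)], [(0,13), (3,30), (5,8)], [(2,18), (4,11), (6,9)], [(1,24), (4,10), (7,5)]],
    [[(0,17), (1,24), (4,8)], [(3,0), (6,2), (7,6)], [(0,24), (2,15), (5,37)], [(1,14), (2,32), (7,5)], [(3,11), (6,36), (7,22)], [(4,28), (5,11), (6,34)], [(1,16), (3,16), (5,18)], [(0,4), (2,1), (4,12)]],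
    [[(2,8), (4,8), (6,31)], [(3,13), (5,20), (6,36)], [(0,8), (3,24), (7,7)], [(0,15), (1,17), (2,15)], [(1,19), (4,24), (7,8)], [(2,10), (4,16), (6,17)], [(0,37), (5,3), (7,6)], [(1,21), (3,32), (5,28)]],
    [[(0,4), (5,14), (7,19)], [(2,10), (4,33), (5,22)], [(1,15), (2,6), (7,24)], [(1,11), (3,29), (6,36)], [(3,22), (4,35), (6,37)], [(0,9), (3,33), (4,25)], [(1,7), (2,35), (5,3)], [(0,29), (6,14), (7,23)]],
    [[(0,24), (1,15), (3,23)], [(1,7), (4,9), (5,4)], [(2,31), (3,36), (4,22)], [(2,8), (3,37), (7,18)], [(0,37), (5,12), (7,38)], [(0,8), (1,11), (6,7)], [(2,27), (6,14), (7,13)], [(4,29), (5,14), (6,36)]]]"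

definition quadruples_126 :: "(nat \<times> int) list list" where
  "quadruples_126 = [[(0,3), (2,8), (3,36), (6,5)],
    [(0,27), (2,1), (6,16), (7,22)],
    [(1,33), (2,33), (5,27), (7,2)],
    [(1,26), (3,13), (4,22), (7,22)],
    [(0,7), (4,33), (5,3), (6,36)],
    [(0,0), (2,20), (4,24), (5,8)],
    [(1,37), (3,22), (5,26), (6,18)],
    [(0,10), (1,37), (4,14), (7,35)],
    [(1,37), (4,13), (5,14), (7,16)],
    [(1,6), (2,16), (5,25), (7,20)],
    [(0,14), (2,15), (3,15), (7,16)],
    [(0,38), (3,30), (4,33), (6,7)],
    [(1,29), (3,19), (5,3), (6,33)],
    [(2,24), (3,16), (4,18), (6,7)]]"

definition classes_129 :: "(nat \<times> int) list list list" where
  "classes_129 = [[[(0,21), (3,13), (7,29)], [(0,35), (3,20), (6,26)], [(2,17), (4,23), (6,12)], [(4,34), (6,31), (7,7)], [(1,7), (2,13), (3,12)], [(4,15), (5,31), (7,3)], [(0,10), (1,33), (5,18)], [(1,11), (2,9), (5,11)]],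
    [[(0,10), (4,6), (6,16)], [(1,8), (3,35), (4,19)], [(1,13), (3,3), (7,26)], [(0,36), (4,26), (6,29)], [(2,2), (5,8), (7,34)], [(2,24), (5,10), (7,6)], [(3,22), (5,15), (6,0)], [(0,23), (1,15), (2,25)]],
    [[(0,21), (1,2), (2,7)], [(1,37), (2,32), (3,19)], [(3,6), (4,36), (5,15)], [(0,17), (3,23), (6,30)], [(4,20), (5,8), (7,25)], [(4,16), (6,22), (7,5)], [(0,31), (1,36), (5,28)], [(2,24), (6,38), (7,30)]],
    [[(1,32), (2,26), (7,31)], [(1,36), (5,15), (7,17)], [(0,38), (3,10), (4,2)], [(5,34), (6,26), (7,24)], [(2,4), (3,27), (4,1)], [(0,18), (2,3), (6,28)], [(0,7), (3,11), (5,38)], [(1,19), (4,12), (6,36)]],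
    [[(1,13), (4,16), (7,23)], [(0,17), (3,18), (7,4)], [(2,38), (3,35), (6,8)], [(0,15), (3,13), (5,10)], [(4,23), (5,36), (6,9)], [(1,17), (2,31), (6,16)], [(0,13), (1,15), (7,15)], [(2,36), (4,36), (5,11)]],
    [[(0,15), (2,5), (5,16)], [(1,11), (4,28), (7,25)], [(4,3), (5,35), (7,32)], [(1,24), (2,24), (4,11)], [(0,28), (3,33), (5,9)], [(0,14), (3,4), (6,4)], [(1,16), (2,1), (6,17)], [(3,23), (6,24), (7,27)]],
    [[(0,16), (3,34), (4,11)], [(0,36), (1,5), (5,14)], [(2,14), (4,28), (6,27)], [(1,34), (5,21), (6,29)], [(1,21), (3,29), (5,10)], [(0,38), (2,7), (7,33)], [(2,21), (6,4), (7,28)], [(3,18), (4,27), (7,38)]],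
    [[(1,14), (2,4), (3,38)], [(0,12), (4,9), (7,35)], [(1,30), (3,16), (5,10)], [(4,17), (6,18), (7,34)], [(1,19), (2,32), (5,21)], [(0,37), (3,6), (6,16)], [(0,32), (4,10), (7,33)], [(2,12), (5,5), (6,8)]],
    [[(2,29), (3,27), (6,2)], [(0,26), (5,20), (6,7)], [(2,24), (3,17), (4,32)], [(1,5), (5,15), (7,7)], [(0,34), (2,37), (3,4)], [(0,12), (1,10), (7,5)], [(4,10), (5,1), (6,18)], [(1,9), (4,27), (7,30)]],
    [[(0,16), (2,11), (4,10)], [(4,26), (5,31), (6,7)], [(2,3), (3,25), (5,29)], [(1,16), (3,18), (6,29)], [(0,8), (2,4), (5,12)], [(0,27), (1,14), (7,23)], [(4,27), (6,9), (7,37)], [(1,0), (3,14), (7,27)]],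
    [[(0,34), (2,7), (5,23)], [(1,34), (3,32), (7,21)], [(0,24), (4,8), (6,13)], [(1,15), (4,13), (6,30)], [(1,2), (4,6), (5,13)], [(2,30), (3,6), (7,5)], [(2,17), (5,36), (6,17)], [(0,32), (3,10), (7,4)]],
    [[(0,32), (6,34), (7,35)], [(0,34), (4,1), (7,16)], [(3,7), (5,12), (7,18)], [(0,6), (1,38), (2,20)], [(1,28), (3,24), (4,27)], [(2,0), (5,7), (6,21)], [(3,20), (4,26), (5,32)], [(1,18), (2,4), (6,23)]],
    [[(0,28), (3,30), (5,19)], [(3,14), (6,1), (7,35)], [(2,15), (4,4), (5,24)], [(1,38), (2,11), (4,23)], [(0,3), (1,13), (7,7)], [(1,21), (3,13), (6,2)], [(0,8), (5,20), (7,27)], [(2,16), (4,0), (6,33)]],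
    [[(0,32), (1,31), (7,20)], [(1,18), (3,31), (5,9)], [(2,18), (6,23), (7,31)], [(0,31), (4,16), (5,8)], [(2,38), (3,23), (4,24)], [(0,0), (2,13), (4,8)], [(1,23), (3,30), (6,27)], [(5,4), (6,22), (7,9)]],
    [[(0,1), (2,24), (4,6)], [(0,21), (5,26), (6,33)], [(1,31), (4,31), (5,25)], [(1,18), (2,26), (6,34)], [(3,38), (5,0), (7,30)], [(3,37), (6,17), (7,16)], [(0,11), (1,5), (7,8)], [(2,19), (3,30), (4,38)]],
    [[(2,12), (3,3), (5,33)], [(0,1), (2,8), (7,0)], [(3,37), (6,16), (7,4)], [(0,17), (4,33), (7,35)], [(1,3), (5,20), (6,14)], [(1,2), (4,25), (6,21)], [(0,0), (2,16), (4,26)], [(1,28), (3,11), (5,10)]],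
    [[(3,28), (5,5), (6,10)], [(3,5), (4,5), (5,1)], [(1,5), (2,25), (4,19)], [(0,30), (1,36), (4,30)], [(2,33), (6,9), (7,16)], [(0,23), (1,1), (6,38)], [(0,1), (2,5), (7,38)], [(3,15), (5,15), (7,0)]],
    [[(2,27), (3,1), (7,3)], [(1,26), (4,7), (6,26)], [(4,36), (5,22), (7,16)], [(0,30), (2,23), (6,33)], [(1,19), (3,36), (5,26)], [(0,25), (2,19), (3,8)], [(0,5), (5,18), (6,22)], [(1,3), (4,5), (7,38)]],
    [[(0,34), (5,14), (7,17)], [(2,34), (3,2), (7,36)], [(4,15), (5,0), (7,37)], [(0,21), (1,12), (3,1)], [(1,20), (2,17), (6,7)], [(2,36), (3,36), (6,27)], [(0,29), (1,25), (4,11)], [(4,10), (5,31), (6,32)]],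
    [[(3,27), (4,9), (6,1)], [(3,11), (5,33), (7,8)], [(0,15), (5,38), (6,24)], [(0,19), (1,23), (4,5)], [(1,4), (2,8), (7,36)], [(1,21), (5,34), (6,29)], [(2,12), (4,28), (7,7)], [(0,2), (2,19), (3,28)]],
    [[(0,19), (4,31), (6,35)], [(1,5), (4,20), (5,21)], [(0,38), (3,26), (5,1)], [(3,27), (6,21), (7,18)], [(2,32), (6,31), (7,4)], [(2,1), (5,23), (7,2)], [(1,16), (3,10), (4,24)], [(0,24), (1,6), (2,15)]],
    [[(1,7), (2,10), (4,13)], [(0,3), (3,13), (4,17)], [(1,27), (3,26), (6,34)], [(3,27), (5,35), (7,34)], [(5,34), (6,23), (7,29)], [(2,2), (5,6), (7,21)], [(0,7), (1,29), (2,12)], [(0,17), (4,27), (6,0)]],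
    [[(2,31), (5,32), (6,29)], [(0,11), (3,6), (6,30)], [(1,35), (3,35), (4,31)], [(4,14), (5,1), (7,20)], [(0,27), (1,12), (2,3)], [(2,32), (5,6), (7,28)], [(3,10), (4,9), (7,0)], [(0,7), (1,4), (6,7)]],
    [[(0,10), (3,25), (5,32)], [(1,8), (5,16), (7,32)], [(2,11), (6,17), (7,34)], [(0,23), (2,33), (6,30)], [(0,36), (2,19), (4,17)], [(1,7), (4,16), (5,6)], [(3,20), (4,9), (6,4)], [(1,3), (3,18), (7,21)]],
    [[(0,23), (6,15), (7,17)], [(1,33), (3,28), (4,1)], [(1,4), (2,5), (3,24)], [(2,0), (4,29), (7,10)], [(0,13), (5,13), (7,33)], [(3,17), (5,20), (6,19)], [(1,14), (2,31), (4,33)], [(0,6), (5,9), (6,32)]],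
    [[(1,4), (6,27), (7,9)], [(2,32), (3,37), (6,35)], [(1,8), (4,24), (5,35)], [(2,3), (5,33), (7,19)], [(0,32), (3,18), (4,8)], [(0,18), (4,22), (6,13)], [(2,13), (3,14), (5,16)], [(0,34), (1,6), (7,23)]],
    [[(0,21), (4,4), (7,12)], [(2,4), (4,11), (6,22)], [(0,25), (1,38), (6,23)], [(1,30), (5,27), (7,16)], [(1,31), (5,32), (6,6)], [(3,36), (4,15), (7,29)], [(2,17), (3,31), (5,16)], [(0,2), (2,33), (3,35)]],
    [[(0,9), (6,30), (7,34)], [(2,27), (3,31), (7,6)], [(1,2), (5,37), (6,4)], [(1,24), (2,26), (5,5)], [(2,4), (4,5), (5,27)], [(0,37), (3,21), (4,7)], [(3,26), (4,24), (6,14)], [(0,17), (1,31), (7,23)]],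
    [[(3,14), (4,24), (5,27)], [(2,14), (6,7), (7,17)], [(0,32), (3,25), (5,4)], [(2,4), (6,15), (7,28)], [(0,19), (1,7), (4,37)], [(0,30), (1,3), (7,15)], [(1,26), (2,18), (6,5)], [(3,3), (4,14), (5,26)]],
    [[(2,23), (4,1), (7,22)], [(0,5), (4,12), (6,19)], [(2,22), (3,4), (6,29)], [(0,10), (3,26), (7,2)], [(0,0), (1,0), (5,14)], [(1,29), (4,26), (7,30)], [(1,13), (3,36), (5,16)], [(2,15), (5,0), (6,9)]],
    [[(1,3), (3,21), (7,26)], [(4,10), (6,23), (7,3)], [(0,1), (5,28), (6,28)], [(2,0), (3,20), (4,15)], [(1,22), (4,14), (5,12)], [(0,27), (3,16), (5,26)], [(1,5), (2,4), (7,13)], [(0,35), (2,5), (6,36)]],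
    [[(3,0), (4,33), (5,11)], [(4,8), (6,22), (7,6)], [(0,16), (3,37), (6,20)], [(0,18), (6,3), (7,23)], [(1,0), (2,23), (4,34)], [(1,13), (2,6), (7,10)], [(1,32), (2,28), (5,25)], [(0,14), (3,14), (5,0)]],
    [[(1,15), (3,27), (7,37)], [(2,27), (3,35), (5,27)], [(0,37), (2,37), (5,13)], [(1,11), (4,1), (6,17)], [(1,19), (3,28), (6,9)], [(0,21), (4,23), (7,36)], [(2,20), (4,12), (7,11)], [(0,11), (5,17), (6,10)]],
    [[(0,15), (4,3), (5,11)], [(4,26), (5,10), (7,22)], [(3,28), (6,33), (7,24)], [(0,22), (1,12), (4,13)], [(1,19), (6,31), (7,17)], [(1,8), (2,15), (3,9)], [(2,28), (5,33), (6,29)], [(0,38), (2,17), (3,35)]],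
    [[(1,24), (2,1), (5,36)], [(1,13), (3,23), (4,1)], [(5,19), (6,29), (7,29)], [(5,35), (6,18), (7,36)], [(0,12), (2,32), (4,23)], [(0,10), (1,17), (2,36)], [(3,25), (4,30), (7,25)], [(0,11), (3,24), (6,16)]],
    [[(0,16), (2,15), (7,32)], [(2,37), (3,1), (4,25)], [(1,27), (3,14), (6,18)], [(3,9), (5,15), (6,5)], [(0,26), (1,5), (7,16)], [(4,38), (6,1), (7,30)], [(0,3), (1,28), (5,32)], [(2,8), (4,21), (5,25)]],
    [[(4,14), (5,13), (6,32)], [(0,37), (3,1), (7,10)], [(2,30), (3,3), (6,18)], [(0,15), (2,4), (7,24)], [(1,22), (5,17), (6,19)], [(1,38), (3,29), (4,12)], [(0,17), (1,6), (4,16)], [(2,32), (5,24), (7,32)]],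
    [[(1,29), (5,5), (7,5)], [(2,13), (4,22), (6,15)], [(0,29), (1,9), (6,1)], [(4,15), (5,10), (7,31)], [(0,21), (3,12), (6,5)], [(3,16), (4,23), (5,3)], [(0,28), (1,37), (2,26)], [(2,0), (3,29), (7,12)]],
    [[(0,35), (2,17), (3,3)], [(3,28), (6,5), (7,1)], [(4,12), (5,1), (6,12)], [(1,13), (3,29), (7,17)], [(1,36), (6,22), (7,27)], [(2,7), (4,31), (5,2)], [(0,21), (2,9), (5,3)], [(0,13), (1,29), (4,2)]],
    [[(2,29), (4,34), (5,10)], [(0,12), (3,32), (5,30)], [(0,20), (5,5), (7,37)], [(0,25), (1,26), (6,19)], [(1,7), (3,13), (7,14)], [(2,19), (4,15), (6,3)], [(1,0), (2,18), (7,6)], [(3,6), (4,26), (6,35)]],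
    [[(0,12), (5,38), (7,22)], [(2,9), (3,5), (4,2)], [(1,22), (6,5), (7,38)], [(1,24), (3,4), (6,13)], [(3,9), (4,36), (6,12)], [(0,17), (4,10), (5,10)], [(0,13), (1,8), (2,19)], [(2,38), (5,9), (7,36)]],
    [[(0,3), (2,22), (6,11)], [(2,33), (4,16), (7,2)], [(1,35), (4,24), (5,33)], [(2,29), (3,21), (7,19)], [(0,7), (1,22), (5,5)], [(0,17), (3,13), (7,30)], [(1,15), (3,8), (6,3)], [(4,17), (5,19), (6,1)]],
    [[(1,16), (5,0), (6,37)], [(1,17), (2,4), (3,14)], [(1,9), (4,31), (6,18)], [(0,38), (2,0), (4,18)], [(3,37), (4,17), (7,17)], [(2,23), (5,35), (7,9)], [(0,36), (3,9), (5,4)], [(0,1), (6,26), (7,1)]]]"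

definition quadruples_129 :: "(nat \<times> int) list list" where
  "quadruples_129 = [[(0,37), (4,35), (6,33), (7,5)],
    [(1,36), (2,24), (3,1), (5,22)],
    [(0,24), (2,35), (3,23), (4,16)],
    [(0,19), (2,16), (3,33), (4,20)],
    [(0,6), (1,9), (5,15), (6,3)],
    [(2,16), (5,4), (6,20), (7,13)],
    [(0,6), (4,19), (5,16), (7,20)],
    [(1,24), (2,0), (5,29), (6,20)],
    [(1,24), (3,27), (4,29), (7,14)],
    [(1,15), (3,26), (6,25), (7,34)]]"

definition classes_132 :: "(nat \<times> int) list list list" where
  "classes_132 = [[[(1,4), (2,10), (3,9)], [(2,17), (4,26), (5,20)], [(0,11), (3,1), (7,4)], [(4,18), (5,30), (6,28)], [(1,5), (6,3), (7,24)], [(1,0), (2,36), (5,4)], [(0,30), (4,25), (7,38)], [(0,34), (3,38), (6,11)]],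
    [[(2,29), (5,22), (7,32)], [(0,11), (3,33), (4,13)], [(4,38), (6,35), (7,7)], [(1,0), (3,25), (6,15)], [(1,37), (4,24), (7,24)], [(1,14), (5,6), (6,25)], [(0,30), (2,1), (5,29)], [(0,1), (2,36), (3,14)]],
    [[(4,21), (5,20), (7,15)], [(2,38), (3,28), (7,20)], [(0,23), (1,7), (4,31)], [(0,15), (5,18), (6,5)], [(0,13), (3,27), (5,4)], [(1,36), (2,16), (6,1)], [(2,27), (6,33), (7,16)], [(1,14), (3,32), (4,5)]],
    [[(2,23), (3,8), (7,38)], [(0,36), (2,30), (5,11)], [(0,16), (3,33), (6,21)], [(1,20), (4,21), (5,16)], [(3,22), (4,4), (7,6)], [(1,22), (6,4), (7,16)], [(2,16), (4,23), (5,0)], [(0,32), (1,33), (6,23)]],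
    [[(0,33), (6,5), (7,14)], [(0,5), (2,25), (4,35)], [(3,9), (4,37), (5,20)], [(1,3), (3,5), (7,34)], [(0,28), (1,28), (6,13)], [(1,17), (2,11), (5,15)], [(2,9), (4,30), (7,36)], [(3,16), (5,37), (6,0)]],
    [[(2,15), (3,6), (5,20)], [(0,33), (1,20), (6,4)], [(0,8), (5,18), (7,8)], [(1,16), (3,7), (4,15)], [(2,20), (6,6), (7,10)], [(0,37), (1,30), (4,37)], [(3,17), (4,20), (5,25)], [(2,31), (6,26), (7,15)]],
    [[(0,1), (3,38), (5,3)], [(1,36), (2,5), (4,2)], [(1,4), (2,21), (3,3)], [(2,10), (6,12), (7,4)], [(5,10), (6,28), (7,30)], [(0,35), (4,7), (7,8)], [(0,24), (1,29), (4,6)], [(3,37), (5,5), (6,26)]],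
    [[(1,23), (4,17), (5,1)], [(0,32), (4,3), (7,37)], [(0,1), (5,24), (6,8)], [(3,0), (6,30), (7,20)], [(1,21), (5,35), (7,36)], [(0,18), (2,18), (3,10)], [(1,28), (2,14), (3,8)], [(2,10), (4,1), (6,28)]],
    [[(5,11), (6,35), (7,13)], [(0,28), (1,9), (7,15)], [(3,5), (4,25), (7,5)], [(0,24), (1,19), (2,15)], [(2,4), (5,4), (6,3)], [(0,8), (4,11), (6,1)], [(1,35), (3,9), (4,18)], [(2,11), (3,37), (5,27)]],
    [[(4,2), (5,9), (6,37)], [(0,31), (3,7), (4,6)], [(1,29), (6,18), (7,14)], [(0,17), (5,34), (6,35)], [(0,15), (2,3), (7,13)], [(1,21), (2,31), (3,14)], [(1,37), (3,21), (4,7)], [(2,32), (5,8), (7,12)]],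
    [[(2,28), (5,34), (6,24)], [(2,38), (4,5), (5,9)], [(0,5), (1,34), (5,29)], [(0,25), (1,38), (2,15)], [(3,22), (4,6), (7,21)], [(1,21), (6,28), (7,38)], [(3,9), (4,19), (7,28)], [(0,3), (3,8), (6,17)]],
    [[(1,11), (2,24), (5,19)], [(3,11), (4,22), (7,27)], [(0,13), (4,29), (7,16)], [(0,5), (3,31), (6,17)], [(0,18), (1,22), (2,10)], [(2,35), (4,36), (6,1)], [(3,33), (5,27), (7,2)], [(1,3), (5,14), (6,30)]],
    [[(0,15), (2,1), (6,23)], [(1,12), (3,7), (5,37)], [(0,29), (1,2), (7,15)], [(2,35), (4,22), (6,6)], [(0,25), (5,2), (7,17)], [(1,10), (2,12), (3,26)], [(3,36), (4,27), (6,34)], [(4,23), (5,12), (7,4)]],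
    [[(4,32), (5,7), (6,34)], [(0,1), (2,7), (3,34)], [(2,26), (4,22), (7,25)], [(0,33), (3,35), (5,23)], [(1,14), (6,11), (7,36)], [(1,31), (4,12), (7,26)], [(0,26), (2,30), (6,30)], [(1,12), (3,12), (5,30)]],
    [[(5,25), (6,22), (7,38)], [(0,31), (4,5), (5,3)], [(1,7), (3,11), (6,3)], [(2,26), (3,10), (7,37)], [(0,8), (1,14), (2,19)], [(3,12), (6,26), (7,33)], [(0,33), (1,15), (4,3)], [(2,21), (4,34), (5,8)]],
    [[(1,22), (2,11), (3,29)], [(2,16), (3,16), (4,32)], [(0,5), (5,3), (7,14)], [(3,18), (5,1), (6,12)], [(1,36), (4,36), (6,35)], [(4,25), (6,10), (7,15)], [(0,34), (1,2), (2,3)], [(0,24), (5,17), (7,1)]],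
    [[(4,10), (5,20), (7,26)], [(1,0), (3,21), (4,14)], [(1,13), (2,0), (3,7)], [(1,17), (5,22), (7,10)], [(3,17), (5,3), (7,24)], [(0,11), (4,0), (6,32)], [(0,31), (2,4), (6,12)], [(0,6), (2,38), (6,25)]],
    [[(0,13), (1,16), (3,36)], [(0,30), (4,8), (6,16)], [(1,36), (2,1), (4,9)], [(1,29), (3,14), (6,21)], [(5,22), (6,14), (7,27)], [(0,14), (5,0), (7,32)], [(2,30), (3,28), (5,38)], [(2,14), (4,19), (7,16)]],
    [[(0,33), (1,25), (3,0)], [(2,35), (5,25), (6,33)], [(2,33), (4,19), (6,5)], [(1,18), (5,3), (7,0)], [(0,16), (3,1), (7,5)], [(3,26), (4,30), (5,38)], [(0,32), (4,17), (7,34)], [(1,32), (2,16), (6,25)]],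
    [[(0,31), (3,19), (4,15)], [(1,16), (4,20), (5,37)], [(2,20), (6,34), (7,25)], [(1,23), (5,35), (6,26)], [(0,3), (2,10), (7,17)], [(3,35), (6,15), (7,30)], [(0,2), (2,18), (4,37)], [(1,9), (3,15), (5,0)]],
    [[(2,11), (3,6), (5,3)], [(0,16), (4,14), (6,17)], [(1,32), (2,30), (7,21)], [(0,30), (4,27), (5,17)], [(1,21), (3,38), (6,4)], [(3,31), (4,10), (6,24)], [(0,35), (1,10), (7,20)], [(2,13), (5,7), (7,10)]],
    [[(0,25), (4,19), (5,34)], [(1,25), (2,28), (7,23)], [(0,14), (2,15), (6,8)], [(0,0), (3,30), (5,6)], [(3,31), (5,23), (6,27)], [(1,30), (4,26), (6,31)], [(2,17), (3,29), (7,0)], [(1,32), (4,27), (7,13)]],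
    [[(1,37), (6,14), (7,38)], [(2,34), (3,14), (7,15)], [(1,6), (2,6), (5,7)], [(3,21), (4,35), (6,27)], [(0,12), (1,29), (4,18)], [(3,25), (4,31), (5,18)], [(0,32), (2,17), (5,14)], [(0,31), (6,19), (7,25)]],
    [[(3,4), (5,3), (7,21)], [(1,5), (3,14), (4,8)], [(2,20), (4,9), (6,21)], [(1,18), (3,6), (4,4)], [(0,29), (2,4), (5,29)], [(2,30), (6,7), (7,7)], [(0,1), (1,31), (7,35)], [(0,30), (5,31), (6,14)]],
    [[(1,8), (2,28), (5,27)], [(0,2), (6,37), (7,31)], [(2,21), (4,16), (6,38)], [(0,34), (1,33), (7,5)], [(0,18), (4,11), (5,7)], [(2,26), (3,19), (5,14)], [(3,5), (4,27), (6,27)], [(1,34), (3,21), (7,36)]],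
    [[(0,14), (1,23), (5,6)], [(3,32), (4,20), (6,31)], [(2,13), (4,16), (5,35)], [(1,12), (6,29), (7,17)], [(0,10), (2,8), (6,36)], [(0,15), (3,33), (5,22)], [(1,13), (3,16), (7,25)], [(2,30), (4,9), (7,30)]],
    [[(3,34), (4,10), (6,19)], [(0,14), (2,3), (6,6)], [(1,13), (4,26), (5,19)], [(1,32), (2,14), (7,23)], [(2,34), (3,5), (5,8)], [(0,33), (4,12), (6,32)], [(1,33), (5,9), (7,21)], [(0,22), (3,15), (7,13)]],
    [[(4,25), (5,7), (7,24)], [(3,16), (4,6), (7,2)], [(1,3), (2,10), (3,38)], [(0,6), (1,28), (6,3)], [(2,0), (5,24), (6,19)], [(0,23), (5,2), (7,1)], [(0,37), (2,11), (4,38)], [(1,8), (3,0), (6,2)]],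
    [[(3,38), (5,16), (6,33)], [(0,27), (2,26), (3,27)], [(0,2), (1,4), (4,6)], [(1,29), (4,1), (5,3)], [(2,33), (4,8), (7,12)], [(0,25), (6,8), (7,22)], [(5,32), (6,37), (7,17)], [(1,24), (2,19), (3,25)]],
    [[(2,0), (3,5), (7,1)], [(4,4), (5,13), (7,11)], [(0,8), (3,36), (6,8)], [(0,19), (2,2), (4,2)], [(1,1), (2,31), (4,24)], [(1,33), (5,35), (6,6)], [(0,0), (1,11), (3,19)], [(5,6), (6,13), (7,6)]],
    [[(0,5), (2,8), (5,17)], [(2,13), (3,16), (7,27)], [(1,38), (4,35), (6,24)], [(0,18), (3,17), (4,4)], [(1,18), (5,28), (6,28)], [(4,33), (6,20), (7,17)], [(2,18), (5,9), (7,31)], [(0,4), (1,28), (3,0)]],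
    [[(0,6), (1,3), (3,18)], [(2,28), (3,32), (7,21)], [(4,12), (5,32), (6,6)], [(0,31), (6,1), (7,19)], [(3,19), (4,11), (6,32)], [(0,17), (5,36), (7,32)], [(1,25), (2,36), (4,1)], [(1,38), (2,14), (5,28)]],
    [[(1,14), (6,5), (7,13)], [(2,23), (5,19), (7,27)], [(0,17), (1,3), (2,34)], [(0,1), (3,4), (4,28)], [(4,30), (5,21), (6,7)], [(2,30), (4,2), (5,2)], [(0,27), (3,9), (7,11)], [(1,19), (3,29), (6,6)]],
    [[(1,14), (3,26), (7,11)], [(1,3), (4,24), (5,35)], [(0,8), (3,33), (7,30)], [(2,22), (4,7), (6,26)], [(0,22), (3,31), (5,27)], [(0,21), (5,16), (6,36)], [(2,23), (4,38), (7,31)], [(1,37), (2,30), (6,37)]],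
    [[(0,10), (1,20), (7,29)], [(0,12), (2,14), (3,22)], [(0,14), (2,1), (6,31)], [(4,18), (5,21), (7,10)], [(2,36), (3,33), (6,30)], [(1,1), (5,8), (7,15)], [(3,23), (4,28), (5,7)], [(1,3), (4,32), (6,23)]],
    [[(2,18), (4,38), (5,30)], [(1,4), (6,17), (7,4)], [(1,27), (2,2), (6,22)], [(1,35), (5,32), (7,12)], [(0,25), (3,33), (4,1)], [(0,33), (3,10), (5,16)], [(0,17), (2,1), (6,30)], [(3,26), (4,27), (7,38)]],
    [[(3,27), (4,27), (7,10)], [(0,4), (1,20), (6,38)], [(0,0), (2,19), (4,31)], [(1,7), (5,23), (6,16)], [(2,33), (5,13), (7,0)], [(3,13), (4,8), (7,26)], [(0,14), (1,33), (2,23)], [(3,8), (5,9), (6,12)]],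
    [[(1,10), (2,32), (3,8)], [(1,38), (5,25), (7,2)], [(3,33), (5,14), (6,20)], [(0,32), (4,19), (7,4)], [(4,14), (6,9), (7,12)], [(0,31), (2,28), (4,30)], [(0,33), (1,27), (5,27)], [(2,3), (3,16), (6,16)]],
    [[(0,11), (1,9), (7,17)], [(2,28), (4,20), (5,26)], [(0,28), (2,33), (3,29)], [(0,18), (6,24), (7,25)], [(1,14), (3,36), (4,33)], [(4,13), (5,10), (6,19)], [(1,25), (5,24), (7,15)], [(2,17), (3,37), (6,38)]],
    [[(1,28), (4,21), (5,9)], [(0,11), (2,29), (5,7)], [(0,0), (1,27), (4,5)], [(3,4), (5,23), (7,9)], [(2,12), (4,10), (6,27)], [(1,14), (3,11), (6,19)], [(0,19), (3,0), (7,32)], [(2,25), (6,17), (7,37)]],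
    [[(2,33), (3,3), (6,6)], [(0,8), (3,5), (5,5)], [(0,21), (1,29), (7,25)], [(2,25), (5,27), (7,21)], [(1,3), (4,13), (6,11)], [(3,34), (4,12), (6,13)], [(0,1), (1,19), (5,28)], [(2,29), (4,23), (7,14)]],
    [[(0,32), (6,30), (7,14)], [(1,31), (2,1), (4,23)], [(0,18), (1,33), (5,22)], [(0,10), (3,17), (4,30)], [(3,24), (5,33), (7,3)], [(1,11), (5,38), (6,13)], [(2,35), (4,19), (6,32)], [(2,33), (3,19), (7,25)]],
    [[(4,0), (6,15), (7,10)], [(1,31), (5,15), (6,11)], [(1,33), (3,23), (7,17)], [(0,28), (2,10), (7,27)], [(0,36), (3,31), (5,5)], [(3,6), (5,4), (6,16)], [(0,11), (2,6), (4,23)], [(1,14), (2,32), (4,22)]],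
    [[(3,17), (6,32), (7,31)], [(1,23), (4,29), (7,2)], [(1,36), (2,21), (5,0)], [(0,9), (4,28), (5,29)], [(0,22), (4,12), (5,37)], [(2,35), (3,7), (7,33)], [(0,11), (1,7), (6,13)], [(2,19), (3,21), (6,3)]]]"

definition quadruples_132 :: "(nat \<times> int) list list" where
  "quadruples_132 = [[(0,35), (1,24), (4,3), (7,31)],
    [(0,15), (2,30), (6,18), (7,16)],
    [(3,3), (4,5), (5,29), (6,23)],
    [(1,1), (2,0), (4,38), (7,26)],
    [(0,33), (3,5), (5,7), (6,22)],
    [(1,4), (2,16), (3,32), (5,37)]]"

lemma certificate_120: "certificate 8 39 3 classes_120 quadruples_120 \<and> length classes_120 = 40"
  by code_simp

lemma certificate_123: "certificate 8 39 3 classes_123 quadruples_123 \<and> length classes_123 = 41"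
  by code_simp

lemma certificate_126: "certificate 8 39 3 classes_126 quadruples_126 \<and> length classes_126 = 42"
  by code_simp

lemma certificate_129: "certificate 8 39 3 classes_129 quadruples_129 \<and> length classes_129 = 43"
  by code_simp

lemma certificate_132: "certificate 8 39 3 classes_132 quadruples_132 \<and> length classes_132 = 44"
  by code_simp

theorem lemma2p2:
  shows "\<forall>m \<in> {120, 123, 126, 129, 132::nat}.
           has_4GDD_of_type (replicate_mset 8 39 + {#m#})"
proof -
  have "has_4GDD_of_type (replicate_mset 8 39 + {#3 * k#})"
    if "certificate 8 39 3 F Q \<and> length F = k" for F Q k
    using has_4GDD_of_type_if_certificate[of 8 39 3 F Q] that by simp
  from this[OF certificate_120] this[OF certificate_123] this[OF certificate_126]
    this[OF certificate_129] this[OF certificate_132]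
  show ?thesis
    by simp
qed

end
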